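(* Let $H$ be a Hilbert $C^*$-module and $Q\in\mathcal{L}(H)$ an idempotent. Then $s(I-Q)=I-s(Q^* )$. Furthermore, the following statements are equivalent: (i) $s(I-Q)=I-s(Q)$; (ii) $s(Q^* )=s(Q)$; (iii) $Q$ is a projection; (iv) $(s(Q),Q)$ is a quasi-projection pair.
   Context: $H$ is a Hilbert module over a $C^*$-algebra, $\mathcal{L}(H)$ the adjointable operators; projections are self-adjoint idempotents. For $T$, $|T|=(T^*T)^{1/2}$ and $T^\dagger$ is the Moore–Penrose inverse. For an idempotent $Q$, $P_{\mathcal{R}(Q)}$ is the projection onto $\mathcal{R}(Q)$, the matched projection is $m(Q)=\tfrac12(|Q^*|+Q^* )|Q^*|^\dagger(|Q^*|+I)^{-1}(|Q^*|+Q)$, and the supplementary projection is $s(Q)=m(2P_{\mathcal{R}(Q)}-Q)$. A quasi-projection pair is $(P,Q)$ with $P$ a projection, $Q$ an idempotent and $Q^*=(2P-I)Q(2P-I)$. *)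

theory Defs
  imports Complex_Main
begin

text \<open>The algebra of adjointable operators on a
Hilbert C*-module is a unital C*-algebra, and every unital C*-algebra A arises
this way (A is the algebra of adjointable operators on A viewed as a Hilbert
module over itself).  We therefore work in an arbitrary unital C*-algebra.\<close>

class cstar_algebra = real_normed_algebra_1 + banach +
  fixes scaleC :: "complex \<Rightarrow> 'a \<Rightarrow> 'a"
    and adj :: "'a \<Rightarrow> 'a"
  assumes scaleC_of_real: "scaleC (complex_of_real r) x = scaleR r x"
    and scaleC_add_right: "scaleC c (x + y) = scaleC c x + scaleC c y"
    and scaleC_add_left: "scaleC (c + d) x = scaleC c x + scaleC d x"
    and scaleC_scaleC: "scaleC c (scaleC d x) = scaleC (c * d) x"
    and scaleC_one: "scaleC 1 x = x"
    and scaleC_mult_left: "scaleC c (x * y) = scaleC c x * y"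
    and scaleC_mult_right: "scaleC c (x * y) = x * scaleC c y"
    and norm_scaleC: "norm (scaleC c x) = cmod c * norm x"
    and adj_adj: "adj (adj x) = x"
    and adj_add: "adj (x + y) = adj x + adj y"
    and adj_mult: "adj (x * y) = adj y * adj x"
    and adj_scaleC: "adj (scaleC c x) = scaleC (cnj c) (adj x)"
    and cstar_identity: "norm (adj x * x) = norm x ^ 2"

definition idempotent :: "'a::cstar_algebra \<Rightarrow> bool" where
  "idempotent q \<longleftrightarrow> q * q = q"

definition projection :: "'a::cstar_algebra \<Rightarrow> bool" where
  "projection p \<longleftrightarrow> adj p = p \<and> p * p = p"

definition positive :: "'a::cstar_algebra \<Rightarrow> bool" where
  "positive a \<longleftrightarrow> (\<exists>b. a = adj b * b)"

definition psqrt :: "'a::cstar_algebra \<Rightarrow> 'a" where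
  "psqrt a = (THE r. positive r \<and> r * r = a)"

definition absv :: "'a::cstar_algebra \<Rightarrow> 'a" where
  "absv t = psqrt (adj t * t)"

definition mp_inv :: "'a::cstar_algebra \<Rightarrow> 'a" where
  "mp_inv t = (THE x. t * x * t = t \<and> x * t * x = x \<and>
                      adj (t * x) = t * x \<and> adj (x * t) = x * t)"

definition cinv :: "'a::cstar_algebra \<Rightarrow> 'a" where
  "cinv a = (THE b. a * b = 1 \<and> b * a = 1)"

text \<open>Projection onto the range of an idempotent q: the projection p with
R(p) = R(q), i.e. p q = q (R(q) \<subseteq> R(p)) and q p = p (R(p) \<subseteq> R(q)).\<close>
definition range_proj :: "'a::cstar_algebra \<Rightarrow> 'a" where
  "range_proj q = (THE p. projection p \<and> p * q = q \<and> q * p = p)"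

definition matched :: "'a::cstar_algebra \<Rightarrow> 'a" where
  "matched q = scaleR (1/2) ((absv (adj q) + adj q) * mp_inv (absv (adj q))
       * cinv (absv (adj q) + 1) * (absv (adj q) + q))"

definition suppl :: "'a::cstar_algebra \<Rightarrow> 'a" where
  "suppl q = matched (2 * range_proj q - q)"

definition quasi_projection_pair :: "'a::cstar_algebra \<Rightarrow> 'a \<Rightarrow> bool" where
  "quasi_projection_pair p q \<longleftrightarrow> projection p \<and> idempotent q \<and>
      adj q = (2 * p - 1) * q * (2 * p - 1)"

end

theory Submission
  imports Defs "HOL-Analysis.Analysis" "HOL-Computational_Algebra.Formal_Power_Series"
begin

text \<open>Let \<open>S = |Q + Q\<^sup>* - 1|\<close>. Since \<open>(Q + Q\<^sup>* - 1)\<^sup>2 = 1 + g\<^sup>2\<close> for the self-adjoint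
  \<open>g = -i(Q - Q\<^sup>*)\<close>, \<open>S\<close> is an invertible positive square root commuting with \<open>Q\<close> and \<open>Q\<^sup>*\<close>,
  the range projection of \<open>Q\<close> is \<open>P = Q Q\<^sup>* S\<^sup>-\<^sup>2\<close>, and the matched projection of \<open>2P - Q\<close>
  can be computed in closed form:
  \<open>s(Q) = \<onehalf> S\<^sup>-\<^sup>1 (S + 1)\<^sup>-\<^sup>1 ((S + 2)\<^sup>2 P - (S + 2)(Q + Q\<^sup>*) + Q\<^sup>* Q)\<close>.
  The modulus \<open>S\<close> does not change under \<open>Q \<mapsto> Q\<^sup>*\<close> and \<open>Q \<mapsto> 1 - Q\<close>, so every claim
  becomes an identity in the ring generated by \<open>Q, Q\<^sup>*, S, S\<^sup>-\<^sup>1, (S + 1)\<^sup>-\<^sup>1\<close>: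
  \<open>s(1 - Q) + s(Q\<^sup>*) = 1\<close>; \<open>s(Q) - s(Q\<^sup>*) = 2 S\<^sup>-\<^sup>3 (Q Q\<^sup>* - Q\<^sup>* Q)\<close>, which vanishes iff \<open>Q\<close>
  is normal, i.e. a projection; and if \<open>(s(Q), Q)\<close> is a quasi-projection pair then
  \<open>Q Q\<^sup>* = P\<close>, whence \<open>Q = P\<close>.
  The analytic input is that the norm of a self-adjoint element is its spectral radius,
  that \<open>x\<^sup>* x\<close> has nonnegative spectrum, and that square roots exist (binomial series) and
  are unique among positive elements.\<close>

section \<open>Complex scalars and the adjoint\<close>

definition of_complex :: "complex \<Rightarrow> 'a::cstar_algebra" where
  "of_complex c = scaleC c 1"

lemma scaleC_conv_of_complex: "scaleC c (x::'a::cstar_algebra) = of_complex c * x"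
  using scaleC_mult_left[of c 1 x] by (simp add: of_complex_def)

lemma of_complex_commute: "of_complex c * (x::'a::cstar_algebra) = x * of_complex c"
  by (metis mult_1_right of_complex_def scaleC_conv_of_complex scaleC_mult_right)

lemma mult_of_complex_left_commute:
  "x * (of_complex c * (y::'a::cstar_algebra)) = of_complex c * (x * y)"
  by (metis of_complex_commute mult.assoc)

lemma of_complex_mult: "of_complex (c * d) = (of_complex c * of_complex d :: 'a::cstar_algebra)"
  unfolding of_complex_def
  by (simp only: scaleC_scaleC[symmetric] scaleC_conv_of_complex[of c "scaleC d 1"] of_complex_def)

lemma of_complex_add: "of_complex (c + d) = (of_complex c + of_complex d :: 'a::cstar_algebra)"
  by (simp add: of_complex_def scaleC_add_left)

lemma of_complex_of_real:
  "of_complex (complex_of_real r) = (of_real r :: 'a::cstar_algebra)"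
  by (simp add: of_complex_def scaleC_of_real flip: of_real_def)

lemma of_complex_0 [simp]: "of_complex 0 = (0 :: 'a::cstar_algebra)"
  using of_complex_of_real[of 0] by simp

lemma of_complex_1 [simp]: "of_complex 1 = (1 :: 'a::cstar_algebra)"
  using of_complex_of_real[of 1] by simp

lemma of_complex_minus: "of_complex (- c) = (- of_complex c :: 'a::cstar_algebra)"
  by (rule minus_unique[symmetric]) (simp flip: of_complex_add)

lemma of_complex_diff: "of_complex (c - d) = (of_complex c - of_complex d :: 'a::cstar_algebra)"
  unfolding diff_conv_add_uminus of_complex_add of_complex_minus ..

lemma of_complex_numeral: "of_complex (numeral n) = (numeral n :: 'a::cstar_algebra)"
  using of_complex_of_real[of "numeral n"] by simp

lemma norm_of_complex_mult: "norm (of_complex c * x) = cmod c * norm (x::'a::cstar_algebra)"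
  by (metis norm_scaleC scaleC_conv_of_complex)

lemma of_complex_sum: "of_complex (sum f A) = (\<Sum>i\<in>A. of_complex (f i) :: 'a::cstar_algebra)"
  by (induction A rule: infinite_finite_induct) (simp_all add: of_complex_add)

lemma of_complex_mult_power:
  "(of_complex c * h) ^ n = of_complex (c ^ n) * (h::'a::cstar_algebra) ^ n"
proof (induction n)
  case (Suc n)
  have "(of_complex c * h) ^ Suc n = of_complex c * h * (of_complex (c ^ n) * h ^ n)"
    by (simp add: Suc)
  also have "\<dots> = of_complex c * of_complex (c ^ n) * (h * h ^ n)"
    by (simp add: mult_of_complex_left_commute[of h] mult.assoc)
  finally show ?case by (simp add: of_complex_mult)
qed simp

lemma adj_0 [simp]: "adj 0 = (0::'a::cstar_algebra)"
  using adj_add[of "0::'a" 0] by simp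

lemma adj_1 [simp]: "adj 1 = (1::'a::cstar_algebra)"
  using adj_mult[of "adj 1" "1::'a"] by (simp add: adj_adj)

lemma adj_minus [simp]: "adj (- x) = - adj (x::'a::cstar_algebra)"
  by (rule minus_unique[symmetric]) (simp flip: adj_add)

lemma adj_diff [simp]: "adj (x - y) = adj x - adj (y::'a::cstar_algebra)"
  using adj_add[of x "-y"] by simp

lemma adj_of_complex [simp]: "adj (of_complex c) = (of_complex (cnj c) :: 'a::cstar_algebra)"
  by (simp add: of_complex_def adj_scaleC)

lemma adj_of_real [simp]: "adj (of_real r) = (of_real r :: 'a::cstar_algebra)"
  by (metis adj_of_complex complex_cnj_complex_of_real of_complex_of_real)

lemma adj_scaleR [simp]: "adj (scaleR r x) = scaleR r (adj x :: 'a::cstar_algebra)"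
proof -
  have "adj (scaleR r x) = adj x * of_real r" by (simp add: scaleR_conv_of_real adj_mult)
  then show ?thesis by (simp add: of_real_def)
qed

lemma adj_numeral_mult [simp]: "adj (numeral n * x) = numeral n * adj (x::'a::cstar_algebra)"
  by (metis adj_scaleR scaleR_conv_of_real of_real_numeral)

lemma adj_power: "adj (x ^ n) = (adj x ^ n :: 'a::cstar_algebra)"
  by (induction n) (simp_all add: adj_mult power_commutes)

lemma norm_adj [simp]: "norm (adj x) = norm (x::'a::cstar_algebra)"
proof -
  have "norm y \<le> norm (adj y)" for y :: 'a
  proof (cases "y = 0")
    case False
    have "norm y * norm y = norm (adj y * y)" by (simp add: cstar_identity power2_eq_square)
    also have "\<dots> \<le> norm (adj y) * norm y" by (rule norm_mult_ineq)
    finally show ?thesis using False by simp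
  qed simp
  then show ?thesis by (metis adj_adj antisym)
qed

lemma adj_mult_self_eq_0: "adj x * x = 0 \<Longrightarrow> x = (0::'a::cstar_algebra)"
  using cstar_identity[of x] by simp

lemma mult_adj_self_eq_0: "x * adj x = 0 \<Longrightarrow> x = (0::'a::cstar_algebra)"
  by (metis adj_adj adj_0 adj_mult_self_eq_0)

lemma bounded_linear_adj: "bounded_linear (adj :: 'a::cstar_algebra \<Rightarrow> 'a)"
  by (rule bounded_linear_intro[where K=1]) (simp_all add: adj_add)

lemma idempotent_adj: "idempotent Q \<Longrightarrow> idempotent (adj (Q::'a::cstar_algebra))"
  unfolding idempotent_def by (metis adj_mult)

lemma absv_uminus: "absv (- x) = absv (x::'a::cstar_algebra)"
  by (simp add: absv_def)

section \<open>Invertible elements\<close>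

definition has_inverse :: "'a::cstar_algebra \<Rightarrow> bool" where
  "has_inverse a \<longleftrightarrow> (\<exists>b. a * b = 1 \<and> b * a = 1)"

lemma cinv_eq: "a * b = 1 \<Longrightarrow> b * a = 1 \<Longrightarrow> cinv a = (b::'a::cstar_algebra)"
  unfolding cinv_def by (rule the_equality) (auto, metis mult.assoc mult_1_left mult_1_right)

lemma has_inverseI: "a * b = 1 \<Longrightarrow> b * a = (1::'a::cstar_algebra) \<Longrightarrow> has_inverse a"
  unfolding has_inverse_def by blast

lemma cinv_right_inverse: "has_inverse a \<Longrightarrow> a * cinv a = (1::'a::cstar_algebra)"
  unfolding has_inverse_def using cinv_eq by metis

lemma cinv_left_inverse: "has_inverse a \<Longrightarrow> cinv a * a = (1::'a::cstar_algebra)"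
  unfolding has_inverse_def using cinv_eq by metis

lemma has_inverse_1 [simp]: "has_inverse (1::'a::cstar_algebra)"
  by (rule has_inverseI[of 1 1]) simp_all

lemma has_inverse_mult:
  assumes "has_inverse a" "has_inverse (b::'a::cstar_algebra)"
  shows "has_inverse (a * b)" and "cinv (a * b) = cinv b * cinv a"
proof -
  have "a * b * (cinv b * cinv a) = 1"
    by (metis assms cinv_right_inverse mult.assoc mult_1_right)
  moreover have "cinv b * cinv a * (a * b) = 1"
    by (metis assms cinv_left_inverse mult.assoc mult_1_left)
  ultimately show "has_inverse (a * b)" "cinv (a * b) = cinv b * cinv a"
    by (auto intro: has_inverseI cinv_eq)
qed

lemma cinv_commute:
  assumes "has_inverse a" "a * x = x * (a::'a::cstar_algebra)"
  shows "cinv a * x = x * cinv a"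
proof -
  have "cinv a * x = cinv a * x * (a * cinv a)" using cinv_right_inverse[OF assms(1)] by simp
  also have "\<dots> = cinv a * (a * x) * cinv a" by (simp add: assms(2) mult.assoc)
  also have "\<dots> = x * cinv a" using cinv_left_inverse[OF assms(1)] by (simp flip: mult.assoc)
  finally show ?thesis .
qed

lemma cinv_adj: "has_inverse a \<Longrightarrow> cinv (adj (a::'a::cstar_algebra)) = adj (cinv a)"
  by (metis adj_mult adj_1 cinv_eq cinv_left_inverse cinv_right_inverse)

lemma has_inverse_minus_iff: "has_inverse (- a) \<longleftrightarrow> has_inverse (a::'a::cstar_algebra)"
proof -
  have "has_inverse (- b)" if "has_inverse b" for b :: 'a
  proof -
    from that obtain c where "b * c = 1" "c * b = 1" unfolding has_inverse_def by blast
    then show ?thesis by (intro has_inverseI[of _ "- c"]) simp_all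
  qed
  then show ?thesis by (metis minus_minus)
qed

lemma has_inverse_of_complex: "c \<noteq> 0 \<Longrightarrow> has_inverse (of_complex c :: 'a::cstar_algebra)"
  by (rule has_inverseI[of _ "of_complex (inverse c)"]) (simp_all flip: of_complex_mult)

lemma has_inverse_of_complex_mult_iff:
  assumes "c \<noteq> 0"
  shows "has_inverse (of_complex c * x) \<longleftrightarrow> has_inverse (x::'a::cstar_algebra)"
proof
  assume "has_inverse (of_complex c * x)"
  moreover have "x = of_complex (inverse c) * (of_complex c * x)"
    using assms by (simp flip: mult.assoc of_complex_mult)
  ultimately show "has_inverse x"
    using assms by (metis has_inverse_mult(1) has_inverse_of_complex inverse_nonzero_iff_nonzero)
qed (simp add: assms has_inverse_mult(1) has_inverse_of_complex)

lemma cinv_diff: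
  "has_inverse a \<Longrightarrow> has_inverse b \<Longrightarrow> cinv a - cinv b = cinv a * (b - a) * cinv (b::'a::cstar_algebra)"
  by (simp add: algebra_simps cinv_right_inverse cinv_left_inverse mult.assoc)

lemma neumann_series:
  fixes x :: "'a::cstar_algebra"
  assumes "norm x < 1"
  shows "has_inverse (1 - x)" and "norm (cinv (1 - x)) \<le> 1 / (1 - norm x)"
proof -
  have bound: "norm (x ^ n) \<le> norm x ^ n" for n by (rule norm_power_ineq)
  have geometric: "summable (\<lambda>n. norm x ^ n)" using assms by (simp add: summable_geometric)
  have norm_summable: "summable (\<lambda>n. norm (x ^ n))"
    by (rule summable_comparison_test'[OF geometric, of 0]) (simp add: bound)
  then have summable: "summable (\<lambda>n. x ^ n)" by (rule summable_norm_cancel)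
  define s where "s = (\<Sum>n. x ^ n)"
  have telescope: "(\<lambda>n. x ^ n - x ^ Suc n) sums 1"
    using telescope_sums'[OF summable_LIMSEQ_zero[OF summable]] by simp
  have "(\<lambda>n. (1 - x) * x ^ n) sums ((1 - x) * s)" "(\<lambda>n. x ^ n * (1 - x)) sums (s * (1 - x))"
    unfolding s_def using summable_sums[OF summable] by (auto intro: sums_mult sums_mult2)
  moreover have "(\<lambda>n. (1 - x) * x ^ n) = (\<lambda>n. x ^ n - x ^ Suc n)"
    "(\<lambda>n. x ^ n * (1 - x)) = (\<lambda>n. x ^ n - x ^ Suc n)"
    by (simp_all add: algebra_simps power_commutes)
  ultimately have inverse: "(1 - x) * s = 1" "s * (1 - x) = 1"
    using telescope sums_unique2 by metis+
  then show "has_inverse (1 - x)" by (rule has_inverseI)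
  have "norm s \<le> (\<Sum>n. norm (x ^ n))" unfolding s_def by (rule summable_norm[OF norm_summable])
  also have "\<dots> \<le> (\<Sum>n. norm x ^ n)" by (rule suminf_le[OF bound norm_summable geometric])
  also have "\<dots> = 1 / (1 - norm x)" using assms by (simp add: suminf_geometric)
  finally show "norm (cinv (1 - x)) \<le> 1 / (1 - norm x)" by (simp add: cinv_eq[OF inverse])
qed

lemma norm_mult_ineq3:
  "norm (x * y * z) \<le> norm x * norm y * norm (z::'a::real_normed_algebra)"
  by (metis norm_mult_ineq mult_right_mono norm_ge_zero order_trans)

lemma has_inverse_perturb:
  fixes a b :: "'a::cstar_algebra"
  assumes a: "has_inverse a" and close: "norm (cinv a) * norm (b - a) \<le> 1/2"
  shows "has_inverse b" and "norm (cinv b) \<le> 2 * norm (cinv a)"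
proof -
  define y where "y = cinv a * (a - b)"
  have y: "norm y \<le> 1/2"
    unfolding y_def using close norm_mult_ineq[of "cinv a" "a - b"]
    by (simp add: norm_minus_commute)
  have b: "b = a * (1 - y)"
    unfolding y_def by (simp add: algebra_simps cinv_right_inverse[OF a] flip: mult.assoc)
  have inv: "has_inverse (1 - y)" and "norm (cinv (1 - y)) \<le> 1 / (1 - norm y)"
    using neumann_series[of y] y by auto
  moreover have "1 / (1 - norm y) \<le> 2" using y by (simp add: field_simps)
  ultimately have "norm (cinv (1 - y)) \<le> 2" by linarith
  then have "norm (cinv (1 - y)) * norm (cinv a) \<le> 2 * norm (cinv a)"
    by (simp add: mult_right_mono)
  then show "has_inverse b" "norm (cinv b) \<le> 2 * norm (cinv a)"
    unfolding b using has_inverse_mult[OF a inv] norm_mult_ineq order_trans by metis+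
qed

lemma norm_cinv_diff_le:
  fixes a b :: "'a::cstar_algebra"
  assumes a: "has_inverse a" and close: "norm (cinv a) * norm (b - a) \<le> 1/2"
  shows "norm (cinv b - cinv a) \<le> 2 * norm (cinv a) ^ 2 * norm (b - a)"
proof -
  have b: "has_inverse b" "norm (cinv b) \<le> 2 * norm (cinv a)"
    using has_inverse_perturb[OF assms] by auto
  have "norm (cinv b - cinv a) \<le> norm (cinv b) * norm (a - b) * norm (cinv a)"
    unfolding cinv_diff[OF b(1) a] by (rule norm_mult_ineq3)
  also have "\<dots> \<le> 2 * norm (cinv a) * norm (b - a) * norm (cinv a)"
    using b(2) by (simp add: norm_minus_commute mult_right_mono)
  finally show ?thesis by (simp add: power2_eq_square mult_ac)
qed

section \<open>The spectrum\<close>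

definition spectrum :: "'a::cstar_algebra \<Rightarrow> complex set" where
  "spectrum a = {l. \<not> has_inverse (of_complex l - a)}"

lemma spectrum_affine:
  fixes a :: "'a::cstar_algebra"
  assumes "s \<noteq> 0"
  shows "l \<in> spectrum (of_complex c + of_complex s * a) \<longleftrightarrow> (l - c) / s \<in> spectrum a"
proof -
  have "of_complex s * of_complex ((l - c) / s) = (of_complex (l - c) :: 'a)"
    using assms by (simp flip: of_complex_mult)
  then have "of_complex l - (of_complex c + of_complex s * a)
      = of_complex s * (of_complex ((l - c) / s) - a)"
    unfolding right_diff_distrib by (simp add: of_complex_diff algebra_simps)
  then show ?thesis
    using has_inverse_of_complex_mult_iff[OF assms] by (simp add: spectrum_def)
qed

lemma spectrum_add_of_complex:
  "l \<in> spectrum (a + of_complex c) \<longleftrightarrow> l - c \<in> spectrum (a::'a::cstar_algebra)"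
  by (simp add: spectrum_def of_complex_diff algebra_simps)

lemma spectrum_uminus: "l \<in> spectrum (- a) \<longleftrightarrow> - l \<in> spectrum (a::'a::cstar_algebra)"
proof -
  have "of_complex l - (- a) = - (of_complex (- l) - a)" by (simp add: of_complex_minus)
  then show ?thesis unfolding spectrum_def by (simp only: mem_Collect_eq has_inverse_minus_iff)
qed

lemma spectrum_of_real_diff:
  "l \<in> spectrum (of_real t - p) \<longleftrightarrow> complex_of_real t - l \<in> spectrum (p::'a::cstar_algebra)"
proof -
  have "of_real t - p = of_complex (complex_of_real t) + of_complex (-1) * p"
    by (simp add: of_complex_of_real of_complex_minus)
  then show ?thesis
    using spectrum_affine[where s="-1" and c="complex_of_real t" and a=p and l=l]
    by (simp add: algebra_simps)
qed

lemma cmod_le_norm_if_spectrum: "l \<in> spectrum a \<Longrightarrow> cmod l \<le> norm (a::'a::cstar_algebra)"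
proof (rule ccontr)
  assume l: "l \<in> spectrum a" and "\<not> cmod l \<le> norm a"
  then have lt: "norm a < cmod l" and l0: "l \<noteq> 0" by auto
  have "norm (of_complex (inverse l) * a) = norm a / cmod l"
    by (simp add: norm_of_complex_mult norm_inverse divide_inverse)
  also have "\<dots> < 1" using lt l0 by simp
  finally have "has_inverse (1 - of_complex (inverse l) * a)" by (rule neumann_series)
  moreover have "of_complex l - a = of_complex l * (1 - of_complex (inverse l) * a)"
    using l0 by (simp add: algebra_simps flip: mult.assoc of_complex_mult)
  ultimately have "has_inverse (of_complex l - a)"
    using has_inverse_of_complex_mult_iff l0 by metis
  then show False using l by (simp add: spectrum_def)
qed

text \<open>Shift the spectral value up the imaginary axis by \<open>t\<close>: the C*-identity bounds
  the norm of \<open>h + i t\<close> by \<open>\<surd>(\<parallel>h\<parallel>\<^sup>2 + t\<^sup>2)\<close>, which is too small for large \<open>t\<close>.\<close>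
lemma spectrum_self_adjoint_real:
  fixes h :: "'a::cstar_algebra"
  assumes sa: "adj h = h" and l: "l \<in> spectrum h"
  shows "Im l = 0"
proof (rule ccontr)
  assume b0: "Im l \<noteq> 0"
  define t where "t = (norm h ^ 2 + 1) / (2 * Im l)"
  define u :: 'a where "u = of_complex (\<i> * complex_of_real t)"
  have "cmod (l + \<i> * complex_of_real t) \<le> norm (h + u)"
    using l by (intro cmod_le_norm_if_spectrum) (simp add: spectrum_add_of_complex u_def)
  then have "cmod (l + \<i> * complex_of_real t) ^ 2 \<le> norm (h + u) ^ 2"
    by (simp add: power_mono)
  then have "(Re l)^2 + (Im l + t)^2 \<le> norm (h + u) ^ 2"
    by (simp add: cmod_power2)
  also have "norm (h + u) ^ 2 = norm (adj (h + u) * (h + u))" by (rule cstar_identity[symmetric])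
  also have "adj (h + u) * (h + u) = h * h + of_real (t^2)"
  proof -
    have "adj u * u = of_complex (cnj (\<i> * complex_of_real t) * (\<i> * complex_of_real t))"
      unfolding u_def adj_of_complex by (rule of_complex_mult[symmetric])
    also have "cnj (\<i> * complex_of_real t) * (\<i> * complex_of_real t) = complex_of_real (t^2)"
      by (simp add: complex_eq_iff power2_eq_square)
    finally have "adj u * u = (of_real (t^2) :: 'a)" by (simp only: of_complex_of_real)
    moreover have "adj u * h + h * u = 0"
      unfolding u_def by (simp add: of_complex_minus of_complex_commute)
    ultimately show ?thesis by (simp add: adj_add sa algebra_simps)
  qed
  also have "norm (h * h + of_real (t^2)) \<le> norm h ^ 2 + t ^ 2"
  proof -
    have "norm (h * h + of_real (t^2)) \<le> norm (h * h) + norm (of_real (t^2) :: 'a)"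
      by (rule norm_triangle_ineq)
    also have "\<dots> \<le> norm h ^ 2 + t^2"
      using norm_mult_ineq[of h h] by (simp only: norm_of_real power2_eq_square) simp
    finally show ?thesis .
  qed
  finally have "2 * Im l * t \<le> norm h ^ 2" by (simp add: power2_eq_square algebra_simps)
    (smt (verit) zero_le_power2 power2_eq_square)
  moreover have "2 * Im l * t = norm h ^ 2 + 1" using b0 by (simp add: t_def)
  ultimately show False by simp
qed

lemma spectrum_mult_commute:
  fixes a b :: "'a::cstar_algebra"
  assumes l0: "l \<noteq> 0" and l: "l \<in> spectrum (a * b)"
  shows "l \<in> spectrum (b * a)"
proof (rule ccontr)
  assume "l \<notin> spectrum (b * a)"
  then have i: "has_inverse (of_complex l - b * a)" by (simp add: spectrum_def)
  define u where "u = cinv (of_complex l - b * a)"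
  have u: "(of_complex l - b * a) * u = 1" "u * (of_complex l - b * a) = 1"
    using i cinv_right_inverse cinv_left_inverse u_def by auto
  \<comment> \<open>\<open>(l - a b)\<^sup>-\<^sup>1 = l\<^sup>-\<^sup>1 (1 + a (l - b a)\<^sup>-\<^sup>1 b)\<close>\<close>
  define v where "v = of_complex (inverse l) * (1 + a * u * b)"
  have "(of_complex l - a * b) * (1 + a * u * b)
      = of_complex l - a * b + a * ((of_complex l - b * a) * u) * b"
    by (simp add: algebra_simps mult_of_complex_left_commute[of a] mult.assoc)
  then have r: "(of_complex l - a * b) * (1 + a * u * b) = of_complex l" using u by simp
  have "(1 + a * u * b) * (of_complex l - a * b)
      = of_complex l - a * b + a * (u * (of_complex l - b * a)) * b"
    by (simp add: algebra_simps of_complex_commute mult.assoc)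
  then have lft: "(1 + a * u * b) * (of_complex l - a * b) = of_complex l" using u by simp
  have cl: "of_complex (inverse l) * of_complex l = (1::'a)"
    using l0 by (simp flip: of_complex_mult)
  have "(of_complex l - a * b) * v = 1"
    unfolding v_def using r cl by (metis of_complex_commute mult.assoc)
  moreover have "v * (of_complex l - a * b) = 1"
    unfolding v_def using lft cl by (simp add: mult.assoc)
  ultimately have "has_inverse (of_complex l - a * b)" by (rule has_inverseI)
  then show False using l by (simp add: spectrum_def)
qed

section \<open>Norm and spectrum of self-adjoint elements\<close>

text \<open>The spectral radius formula for self-adjoint elements, proved without complex analysis:
  the resolvent \<open>z \<mapsto> (1 - z h)\<^sup>-\<^sup>1\<close> is Lipschitz on the unit disc, averaging it over the
  \<open>m\<close>-th roots of unity gives the resolvent of \<open>h\<^sup>m\<close> with the same Lipschitz constant,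
  and for \<open>m = 2\<^sup>n\<close> the C*-identity makes \<open>\<parallel>h\<^sup>m\<parallel> = \<parallel>h\<parallel>\<^sup>m\<close> too large for that.\<close>

lemma one_minus_mult_sum_power:
  fixes u :: "'a::ring_1"
  shows "(1 - u) * (\<Sum>l<m. u^l) = 1 - u^m"
proof (induction m)
  case 0 show ?case by simp
next
  case (Suc m)
  have "(1 - u) * (\<Sum>l<Suc m. u^l) = (1 - u) * (\<Sum>l<m. u^l) + (1 - u) * u^m"
    by (simp add: distrib_left)
  also have "\<dots> = (1 - u^m) + (u^m - u^Suc m)"
    unfolding Suc by (simp add: algebra_simps power_Suc)
  finally show ?case by simp
qed

lemma sum_power_mult_one_minus:
  fixes u :: "'a::ring_1"
  shows "(\<Sum>l<m. u^l) * (1 - u) = 1 - u^m"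
proof (induction m)
  case 0 show ?case by simp
next
  case (Suc m)
  have "(\<Sum>l<Suc m. u^l) * (1 - u) = (\<Sum>l<m. u^l) * (1 - u) + u^m * (1 - u)"
    by (simp add: distrib_right)
  also have "\<dots> = (1 - u^m) + (u^m - u^Suc m)"
    unfolding Suc by (simp add: algebra_simps power_Suc2 power_commutes)
  finally show ?case by simp
qed

lemma root_of_unity_power_neq_1:
  assumes "0 < l" "l < m"
  shows "cis (2 * pi / real m) ^ l \<noteq> 1"
proof
  assume a: "cis (2 * pi / real m) ^ l = 1"
  have "cis (2 * pi / real m) ^ l = cis (real l * (2 * pi / real m))" by (rule Complex.DeMoivre)
  then have "cos (real l * (2 * pi / real m)) = 1"
    using a by (metis Complex.cis.sel(1) one_complex.sel(1))
  then obtain n :: int where n: "real l * (2 * pi / real m) = real_of_int n * 2 * pi"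
    using cos_one_2pi_int by blast
  have m0: "real m > 0" using assms by simp
  then have "real l = n * real m" using n by (simp add: field_simps)
  then have "real l = real_of_int n * real m" by simp
  moreover have "0 < real l" "real l < real m" using assms by auto
  ultimately have "0 < real_of_int n" "real_of_int n < 1" using m0
    by (auto simp: zero_less_mult_iff)
  then have "0 < n \<and> n < 1" by simp
  then show False by linarith
qed

lemma root_of_unity_power_pow_eq_1:
  assumes "m > 0"
  shows "(cis (2 * pi / real m) ^ j) ^ m = 1"
proof -
  have "(cis (2 * pi / real m) ^ j) ^ m = (cis (2 * pi / real m) ^ m) ^ j"
    by (simp add: power_mult[symmetric] mult.commute)
  also have "cis (2 * pi / real m) ^ m = cis (real m * (2 * pi / real m))"
    by (rule Complex.DeMoivre)
  also have "real m * (2 * pi / real m) = 2 * pi" using assms by simp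
  finally show ?thesis by simp
qed

lemma sum_root_of_unity_powers:
  assumes "m > 0" "l < m"
  shows "(\<Sum>j<m. (cis (2 * pi / real m) ^ j) ^ l) = (if l = 0 then of_nat m else 0)"
proof (cases "l = 0")
  case False
  define w where "w = cis (2 * pi / real m) ^ l"
  have "w \<noteq> 1" unfolding w_def using root_of_unity_power_neq_1 assms False by simp
  moreover have "w ^ m = 1"
    unfolding w_def using root_of_unity_power_pow_eq_1[OF assms(1), of l]
    by (simp add: power_mult[symmetric] mult.commute)
  moreover have "(\<Sum>j<m. (cis (2 * pi / real m) ^ j) ^ l) = (\<Sum>j<m. w ^ j)"
    unfolding w_def by (simp add: power_mult[symmetric] mult.commute)
  ultimately show ?thesis using False by (simp add: sum_gp_strict)
qed simp

lemma norm_one_minus_cis_le: "cmod (1 - cis t) \<le> 2 * \<bar>t\<bar>"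
proof -
  have "cmod (1 - cis t) \<le> \<bar>Re (1 - cis t)\<bar> + \<bar>Im (1 - cis t)\<bar>" by (rule cmod_le)
  also have "\<dots> = \<bar>1 - cos t\<bar> + \<bar>sin t\<bar>" by simp
  also have "\<bar>1 - cos t\<bar> \<le> \<bar>t\<bar>"
  proof -
    have c: "cos t = 1 - 2 * sin (t/2) ^ 2" using cos_double_sin[of "t/2"] by simp
    have "\<bar>1 - cos t\<bar> = 2 * sin (t/2) ^ 2" unfolding c by simp
    also have "\<dots> \<le> 2 * \<bar>sin (t/2)\<bar>"
    proof -
      have "sin (t/2) ^ 2 = \<bar>sin (t/2)\<bar> * \<bar>sin (t/2)\<bar>" by (metis abs_mult_self_eq power2_eq_square)
      also have "\<dots> \<le> \<bar>sin (t/2)\<bar> * 1" by (intro mult_left_mono) auto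
      finally have "sin (t/2) ^ 2 \<le> \<bar>sin (t/2)\<bar>" by simp
      then show ?thesis by simp
    qed
    also have "\<dots> \<le> 2 * \<bar>t/2\<bar>" using abs_sin_x_le_abs_x[of "t/2"] by simp
    finally show ?thesis by simp
  qed
  moreover have "\<bar>sin t\<bar> \<le> \<bar>t\<bar>" by (rule abs_sin_x_le_abs_x)
  ultimately show ?thesis by simp
qed

lemma continuous_on_resolvent:
  fixes h :: "'a::cstar_algebra"
  assumes inv: "\<And>z. z \<in> S \<Longrightarrow> has_inverse (1 - of_complex z * h)"
  shows "continuous_on S (\<lambda>z. cinv (1 - of_complex z * h))"
  unfolding continuous_on_iff
proof (intro ballI allI impI)
  fix x e assume x: "x \<in> S" and e: "(e::real) > 0"
  define B where "B = norm (cinv (1 - of_complex x * h))"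
  define C where "C = (norm h + 1) * (B + 1)^2"
  define K where "K = 2 * C"
  have B0: "0 \<le> B" by (simp add: B_def)
  then have "B \<le> (B + 1)^2" "B^2 \<le> (B + 1)^2"
    using mult_nonneg_nonneg[OF B0 B0] by (simp_all add: power2_eq_square algebra_simps)
  then have "B * norm h \<le> C" "B^2 * norm h \<le> C" "C > 0"
    using B0 unfolding C_def
    by (auto simp: mult.commute[of _ "norm h"] add_nonneg_pos intro!: mult_mono mult_pos_pos)
  then have K: "2 * B * norm h \<le> K" "2 * B ^ 2 * norm h \<le> K" "K > 0"
    unfolding K_def by linarith+
  show "\<exists>d>0. \<forall>y\<in>S. dist y x < d \<longrightarrow>
      dist (cinv (1 - of_complex y * h)) (cinv (1 - of_complex x * h)) < e"
  proof (intro exI[of _ "min (1 / K) (e / K)"] conjI ballI impI)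
    fix y assume "dist y x < min (1 / K) (e / K)"
    then have y: "cmod (y - x) * K < 1" "cmod (y - x) * K < e"
      using K(3) by (auto simp: dist_norm field_simps)
    have diff: "norm ((1 - of_complex y * h) - (1 - of_complex x * h)) = norm h * cmod (y - x)"
      by (simp add: norm_of_complex_mult norm_minus_commute flip: left_diff_distrib of_complex_diff)
    have "B * (norm h * cmod (y - x)) \<le> 1/2"
      using mult_right_mono[OF K(1), of "cmod (y - x)"] y(1) by (simp add: mult_ac)
    then have "norm (cinv (1 - of_complex y * h) - cinv (1 - of_complex x * h))
        \<le> 2 * B ^ 2 * norm ((1 - of_complex y * h) - (1 - of_complex x * h))"
      using norm_cinv_diff_le[OF inv[OF x], of "1 - of_complex y * h"]
      unfolding diff B_def by blast
    also have "\<dots> = 2 * B ^ 2 * (norm h * cmod (y - x))" by (simp only: diff)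
    also have "\<dots> \<le> K * cmod (y - x)"
      using mult_right_mono[OF K(2), of "cmod (y - x)"] by (simp add: mult_ac)
    finally show "dist (cinv (1 - of_complex y * h)) (cinv (1 - of_complex x * h)) < e"
      using y(2) by (simp add: dist_norm mult.commute)
  qed (use K(3) e in auto)
qed

lemma resolvent_bounded:
  fixes h :: "'a::cstar_algebra"
  assumes "\<And>z. cmod z \<le> 1 \<Longrightarrow> has_inverse (1 - of_complex z * h)"
  obtains M where "M > 0" "\<And>z. cmod z \<le> 1 \<Longrightarrow> norm (cinv (1 - of_complex z * h)) \<le> M"
proof -
  have "compact ((\<lambda>z. cinv (1 - of_complex z * h)) ` cball 0 1)"
    using assms by (intro compact_continuous_image continuous_on_resolvent) auto
  then obtain M where "M > 0" "\<forall>y \<in> (\<lambda>z. cinv (1 - of_complex z * h)) ` cball 0 1. norm y \<le> M"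
    using compact_imp_bounded bounded_pos by metis
  then show ?thesis using that by simp
qed

lemma resolvent_lipschitz:
  fixes h :: "'a::cstar_algebra"
  assumes inv: "has_inverse (1 - of_complex z * h)" "has_inverse (1 - of_complex w * h)"
    and bound: "norm (cinv (1 - of_complex z * h)) \<le> M" "norm (cinv (1 - of_complex w * h)) \<le> M"
  shows "norm (cinv (1 - of_complex z * h) - cinv (1 - of_complex w * h))
    \<le> M * M * norm h * cmod (z - w)"
proof -
  have "cinv (1 - of_complex z * h) - cinv (1 - of_complex w * h)
      = cinv (1 - of_complex z * h) * (of_complex (z - w) * h) * cinv (1 - of_complex w * h)"
    unfolding cinv_diff[OF inv] by (simp add: of_complex_diff algebra_simps)
  also have "norm \<dots> \<le> norm (cinv (1 - of_complex z * h)) * (cmod (z - w) * norm h)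
      * norm (cinv (1 - of_complex w * h))"
    by (metis norm_mult_ineq3 norm_of_complex_mult)
  also have "\<dots> \<le> M * (cmod (z - w) * norm h) * M"
    using bound order_trans[OF norm_ge_zero bound(1)] by (intro mult_mono) auto
  finally show ?thesis by (simp add: mult_ac)
qed

lemma sum_geometric_sums_roots_of_unity:
  fixes h :: "'a::cstar_algebra" and z :: complex and m :: nat
  defines "w \<equiv> cis (2 * pi / real m)"
  assumes "m > 0"
  shows "(\<Sum>j<m. \<Sum>l<m. (of_complex (w ^ j * z) * h) ^ l) = of_nat m"
proof -
  have "(\<Sum>j<m. \<Sum>l<m. (of_complex (w ^ j * z) * h) ^ l)
      = (\<Sum>l<m. of_complex ((\<Sum>j<m. (w ^ j) ^ l) * z ^ l) * h ^ l)"
    unfolding of_complex_mult_power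
    by (subst sum.swap) (simp add: power_mult_distrib sum_distrib_right of_complex_sum)
  also have "\<dots> = (\<Sum>l<m. if l = 0 then of_nat m else 0)"
    using sum_root_of_unity_powers[OF assms(2)] of_complex_of_real[of "real m"]
    by (intro sum.cong) (auto simp: w_def)
  finally show ?thesis using assms(2) by simp
qed

text \<open>For \<open>x = z h\<close> and \<open>\<omega> = e\<^sup>2\<^sup>\<pi>\<^sup>i\<^sup>/\<^sup>m\<close>, \<open>(1 - x\<^sup>m) (1 - \<omega>\<^sup>j x)\<^sup>-\<^sup>1 = \<Sum>\<^sub>l\<^sub><\<^sub>m \<omega>\<^sup>j\<^sup>l x\<^sup>l\<close>,
  and summing over \<open>j\<close> cancels every term with \<open>l \<noteq> 0\<close>.\<close>
lemma resolvent_power_average: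
  fixes h :: "'a::cstar_algebra" and z :: complex and m :: nat
  defines "w \<equiv> cis (2 * pi / real m)"
  assumes m0: "m > 0"
    and inv: "\<And>j. j < m \<Longrightarrow> has_inverse (1 - of_complex (w ^ j * z) * h)"
  shows "has_inverse (1 - of_complex (z ^ m) * h ^ m)"
    and "cinv (1 - of_complex (z ^ m) * h ^ m)
      = of_complex (1 / of_nat m) * (\<Sum>j<m. cinv (1 - of_complex (w ^ j * z) * h))"
proof -
  define u where "u j = of_complex (w ^ j * z) * h" for j
  define X where "X = 1 - of_complex (z ^ m) * h ^ m"
  define g where "g = of_complex (1 / of_nat m) * (\<Sum>j<m. cinv (1 - u j))"
  have um: "u j ^ m = of_complex (z ^ m) * h ^ m" for j
    unfolding u_def of_complex_mult_power
    using root_of_unity_power_pow_eq_1[OF m0, of j] by (simp add: power_mult_distrib w_def)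
  have iu: "has_inverse (1 - u j)" if "j < m" for j using inv[OF that] by (simp add: u_def)
  have r: "X * cinv (1 - u j) = (\<Sum>l<m. u j ^ l)" "cinv (1 - u j) * X = (\<Sum>l<m. u j ^ l)"
    if "j < m" for j
  proof -
    have "X = (\<Sum>l<m. u j ^ l) * (1 - u j)"
      unfolding X_def sum_power_mult_one_minus um ..
    then show "X * cinv (1 - u j) = (\<Sum>l<m. u j ^ l)"
      using cinv_right_inverse[OF iu[OF that]] by (simp add: mult.assoc)
    have "X = (1 - u j) * (\<Sum>l<m. u j ^ l)"
      unfolding X_def one_minus_mult_sum_power um ..
    then show "cinv (1 - u j) * X = (\<Sum>l<m. u j ^ l)"
      using cinv_left_inverse[OF iu[OF that]] by (simp flip: mult.assoc)
  qed
  have S: "(\<Sum>j<m. \<Sum>l<m. u j ^ l) = of_nat m"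
    using sum_geometric_sums_roots_of_unity[OF m0] by (simp add: u_def w_def)
  have m: "of_complex (1 / of_nat m) * (of_nat m :: 'a) = 1"
  proof -
    have "(of_nat m :: 'a) = of_complex (of_nat m)"
      using of_complex_of_real[of "real m"] by simp (rule sym)
    then show ?thesis using m0 by (simp flip: of_complex_mult)
  qed
  have "X * (\<Sum>j<m. cinv (1 - u j)) = of_nat m" "(\<Sum>j<m. cinv (1 - u j)) * X = of_nat m"
    using r S by (simp_all add: sum_distrib_left sum_distrib_right)
  then have "X * g = 1" "g * X = 1"
    using m by (simp_all add: g_def mult_of_complex_left_commute mult.assoc)
  then show "has_inverse X" "cinv X = g" by (auto intro: has_inverseI cinv_eq)
qed

lemma resolvent_power_lipschitz:
  fixes h :: "'a::cstar_algebra"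
  assumes m: "m > 0"
    and inv: "\<And>z. cmod z \<le> 1 \<Longrightarrow> has_inverse (1 - of_complex z * h)"
    and lip: "\<And>z w. cmod z \<le> 1 \<Longrightarrow> cmod w \<le> 1 \<Longrightarrow>
      norm (cinv (1 - of_complex z * h) - cinv (1 - of_complex w * h)) \<le> L * cmod (z - w)"
    and z: "cmod z \<le> 1" and w: "cmod w \<le> 1"
  shows "norm (cinv (1 - of_complex (z ^ m) * h ^ m) - cinv (1 - of_complex (w ^ m) * h ^ m))
      \<le> L * cmod (z - w)"
proof -
  define \<omega> where "\<omega> = cis (2 * pi / real m)"
  define f where "f z = cinv (1 - of_complex z * h)" for z
  have \<omega>: "cmod (\<omega> ^ j * y) = cmod y" for j y by (simp add: \<omega>_def norm_mult norm_power)
  have average: "cinv (1 - of_complex (y ^ m) * h ^ m)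
      = of_complex (1 / of_nat m) * (\<Sum>j<m. f (\<omega> ^ j * y))"
    if "cmod y \<le> 1" for y
    using resolvent_power_average[where h=h and z=y and m=m] m inv that \<omega>
    unfolding f_def \<omega>_def by auto
  have "cinv (1 - of_complex (z ^ m) * h ^ m) - cinv (1 - of_complex (w ^ m) * h ^ m)
      = of_complex (1 / of_nat m) * (\<Sum>j<m. f (\<omega> ^ j * z) - f (\<omega> ^ j * w))"
    using z w by (simp add: average sum_subtractf right_diff_distrib)
  also have "norm \<dots> \<le> 1 / real m * (\<Sum>j<m. L * cmod (z - w))"
    unfolding norm_of_complex_mult
  proof (intro mult_mono order_trans[OF norm_sum sum_mono])
    fix j
    show "norm (f (\<omega> ^ j * z) - f (\<omega> ^ j * w)) \<le> L * cmod (z - w)"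
      using lip[of "\<omega> ^ j * z" "\<omega> ^ j * w"] z w \<omega>
      by (simp add: f_def norm_mult \<omega>_def norm_power flip: right_diff_distrib)
  qed (auto simp: norm_divide)
  finally show ?thesis using m by simp
qed

lemma norm_power_two_power_self_adjoint:
  fixes h :: "'a::cstar_algebra"
  assumes "adj h = h"
  shows "norm (h ^ (2 ^ n)) = norm h ^ (2 ^ n)"
proof (induction n)
  case (Suc n)
  have "h ^ (2 ^ Suc n) = adj (h ^ (2 ^ n)) * h ^ (2 ^ n)"
    by (simp add: adj_power assms power_add[symmetric] mult_2)
  then show ?case by (simp add: cstar_identity Suc power_mult[symmetric] mult.commute)
qed simp

text \<open>Compare the resolvents at two points of modulus \<open>r\<close> whose \<open>m\<close>-th powers are \<open>\<plusminus>r\<^sup>m\<close>,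
  where \<open>r\<^sup>m \<parallel>x\<parallel> = 1/2\<close>: their difference is of norm at most \<open>L \<cdot> 2\<pi>/m\<close>, but it is the
  inverse-conjugate of \<open>2 r\<^sup>m x\<close>, which has norm \<open>1\<close>.\<close>
lemma lipschitz_power_resolvent_bound:
  fixes x :: "'a::cstar_algebra"
  assumes m0: "m > 0" and x: "norm x \<ge> 1"
    and inv: "\<And>z. cmod z \<le> 1 \<Longrightarrow> has_inverse (1 - of_complex (z ^ m) * x)"
    and lip: "\<And>z w. cmod z \<le> 1 \<Longrightarrow> cmod w \<le> 1 \<Longrightarrow>
      norm (cinv (1 - of_complex (z ^ m) * x) - cinv (1 - of_complex (w ^ m) * x))
        \<le> L * cmod (z - w)"
  shows "2 * real m \<le> 9 * pi * L"
proof -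
  define r where "r = root m (1 / (2 * norm x))"
  have x0: "x \<noteq> 0" using x by auto
  have "1 / (2 * norm x) \<le> 1" using x by (simp add: divide_le_eq)
  then have r: "0 \<le> r" "r \<le> 1" "r ^ m = 1 / (2 * norm x)" unfolding r_def using m0 x by auto
  define z1 where "z1 = complex_of_real r"
  define z2 where "z2 = complex_of_real r * cis (pi / real m)"
  have z: "cmod z1 \<le> 1" "cmod z2 \<le> 1" using r by (simp_all add: z1_def z2_def norm_mult)
  have "cis (pi / real m) ^ m = cis (real m * (pi / real m))" by (rule Complex.DeMoivre)
  then have "cis (pi / real m) ^ m = -1" using m0 by simp
  then have zm: "z1 ^ m = complex_of_real (r ^ m)" "z2 ^ m = - complex_of_real (r ^ m)"
    by (simp_all add: z1_def z2_def power_mult_distrib)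
  define A1 where "A1 = 1 - of_complex (z1 ^ m) * x"
  define A2 where "A2 = 1 - of_complex (z2 ^ m) * x"
  have "cmod (z1 - z2) = r * cmod (1 - cis (pi / real m))"
    unfolding z1_def z2_def
    by (metis norm_mult norm_of_real abs_of_nonneg r(1) mult.right_neutral right_diff_distrib)
  also have "\<dots> \<le> 1 * (2 * \<bar>pi / real m\<bar>)"
    using r norm_one_minus_cis_le[of "pi / real m"] by (intro mult_mono) auto
  finally have "L * cmod (z1 - z2) \<le> L * (2 * pi / real m)"
    using m0 order_trans[OF norm_ge_zero lip[of 1 0]] by (intro mult_left_mono) auto
  then have "norm (cinv A1 - cinv A2) \<le> L * (2 * pi / real m)"
    unfolding A1_def A2_def using lip[OF z] by linarith
  moreover have "norm A1 \<le> 3/2" "norm A2 \<le> 3/2"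
    using norm_triangle_ineq4[of 1 "of_complex (z1 ^ m) * x"]
      norm_triangle_ineq4[of 1 "of_complex (z2 ^ m) * x"] r x
    by (simp_all add: x0 A1_def A2_def zm norm_of_complex_mult norm_divide norm_mult)
  moreover have "has_inverse A1" "has_inverse A2" using inv z by (simp_all add: A1_def A2_def)
  then have "A2 - A1 = A1 * (cinv A1 - cinv A2) * A2"
    by (simp add: algebra_simps cinv_right_inverse cinv_left_inverse mult.assoc)
  moreover have "A2 - A1 = of_complex (2 * complex_of_real (r ^ m)) * x"
    unfolding A1_def A2_def zm
    by (simp add: of_complex_minus of_complex_mult of_complex_numeral algebra_simps flip: mult_2)
  then have "norm (A2 - A1) = 1" using r x x0 by (simp add: norm_of_complex_mult norm_divide)
  ultimately have "1 \<le> (3/2) * (L * (2 * pi / real m)) * (3/2)"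
    using norm_mult_ineq3[of A1 "cinv A1 - cinv A2" A2]
    by (smt (verit) mult_mono mult_nonneg_nonneg norm_ge_zero)
  then show ?thesis using m0 by (simp add: field_simps)
qed

lemma self_adjoint_norm_less_one:
  fixes h :: "'a::cstar_algebra"
  assumes sa: "adj h = h"
    and inv: "\<And>z. cmod z \<le> 1 \<Longrightarrow> has_inverse (1 - of_complex z * h)"
  shows "norm h < 1"
proof (rule ccontr)
  assume "\<not> norm h < 1"
  obtain M where M: "M > 0" "\<And>z. cmod z \<le> 1 \<Longrightarrow> norm (cinv (1 - of_complex z * h)) \<le> M"
    using resolvent_bounded[OF inv] by blast
  define L where "L = M * M * norm h"
  have lip: "norm (cinv (1 - of_complex z * h) - cinv (1 - of_complex w * h)) \<le> L * cmod (z - w)"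
    if "cmod z \<le> 1" "cmod w \<le> 1" for z w
    using resolvent_lipschitz[OF inv[OF that(1)] inv[OF that(2)] M(2)[OF that(1)] M(2)[OF that(2)]]
    by (simp add: L_def)
  obtain n where n: "9 * pi * L < 2 ^ n" using real_arch_pow[of 2 "9 * pi * L"] by auto
  define m :: nat where "m = 2 ^ n"
  have m0: "m > 0" by (simp add: m_def)
  have "norm (h ^ m) \<ge> 1"
    using \<open>\<not> norm h < 1\<close> by (simp add: m_def norm_power_two_power_self_adjoint[OF sa])
  moreover have "has_inverse (1 - of_complex (z ^ m) * h ^ m)" if "cmod z \<le> 1" for z
    using resolvent_power_average(1)[where h=h and z=z and m=m] m0 inv that
    by (simp add: norm_mult norm_power)
  ultimately have "2 * real m \<le> 9 * pi * L"
    using lipschitz_power_resolvent_bound[OF m0] resolvent_power_lipschitz[OF m0 inv lip] by blast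
  then have "2 * 2 ^ n \<le> 9 * pi * L" by (simp add: m_def)
  moreover have "(0::real) < 2 ^ n" by simp
  ultimately show False using n by linarith
qed

lemma self_adjoint_norm_le_spectral_bound:
  fixes h :: "'a::cstar_algebra"
  assumes sa: "adj h = h" and "\<rho> \<ge> 0" and sp: "\<And>l. l \<in> spectrum h \<Longrightarrow> cmod l \<le> \<rho>"
  shows "norm h \<le> \<rho>"
proof (rule ccontr)
  assume "\<not> norm h \<le> \<rho>"
  define p where "p = (norm h + \<rho>) / 2"
  have p: "p > 0" "\<rho> < p" "p < norm h" unfolding p_def using \<open>\<not> norm h \<le> \<rho>\<close> \<open>\<rho> \<ge> 0\<close> by auto
  have "norm (of_complex (complex_of_real (1 / p)) * h) < 1"
  proof (rule self_adjoint_norm_less_one)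
    show "adj (of_complex (complex_of_real (1 / p)) * h) = of_complex (complex_of_real (1 / p)) * h"
      by (simp add: adj_mult sa of_complex_commute)
    fix z :: complex assume z: "cmod z \<le> 1"
    show "has_inverse (1 - of_complex z * (of_complex (complex_of_real (1 / p)) * h))"
    proof (cases "z = 0")
      case False
      then have "cmod (complex_of_real p / z) \<ge> p" using z p by (simp add: norm_divide field_simps)
      then have "has_inverse (of_complex (complex_of_real p / z) - h)"
        using sp p by (force simp: spectrum_def)
      moreover have "1 - of_complex z * (of_complex (complex_of_real (1 / p)) * h)
          = of_complex (z / complex_of_real p) * (of_complex (complex_of_real p / z) - h)"
        using False p by (simp add: algebra_simps flip: mult.assoc of_complex_mult)
      ultimately show ?thesis using False p by (simp add: has_inverse_of_complex_mult_iff)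
    qed simp
  qed
  then show False using p by (simp add: norm_of_complex_mult norm_divide field_simps)
qed

section \<open>Positivity\<close>

definition spectrum_nonneg :: "'a::cstar_algebra \<Rightarrow> bool" where
  "spectrum_nonneg a \<longleftrightarrow> (\<forall>l\<in>spectrum a. Im l = 0 \<and> 0 \<le> Re l)"

lemma spectrum_nonneg_square:
  fixes y :: "'a::cstar_algebra"
  assumes sa: "adj y = y"
  shows "spectrum_nonneg (y * y)"
  unfolding spectrum_nonneg_def
proof
  fix l assume l: "l \<in> spectrum (y * y)"
  define m where "m = csqrt l"
  have mm: "m * m = l" unfolding m_def by (metis power2_csqrt power2_eq_square)
  have cm: "of_complex m * y = y * of_complex m" by (rule of_complex_commute)
  have ll: "of_complex l = of_complex m * (of_complex m :: 'a)"
    unfolding mm[symmetric] by (rule of_complex_mult)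
  have f1: "of_complex l - y * y = (of_complex m - y) * (of_complex m + y)"
    unfolding ll by (simp add: algebra_simps cm)
  have ni: "\<not> has_inverse (of_complex l - y * y)" using l by (simp add: spectrum_def)
  have "\<not> has_inverse (of_complex m - y) \<or> \<not> has_inverse (of_complex m + y)"
    using ni f1 has_inverse_mult(1) by metis
  moreover have "of_complex m + y = - (of_complex (- m) - y)" by (simp add: of_complex_minus)
  ultimately have "m \<in> spectrum y \<or> - m \<in> spectrum y"
    unfolding spectrum_def mem_Collect_eq by (metis has_inverse_minus_iff)
  then have "Im m = 0"
    using spectrum_self_adjoint_real[OF sa, of m] spectrum_self_adjoint_real[OF sa, of "-m"] by auto
  then have "l = complex_of_real ((Re m)^2)" using mm
    by (simp add: complex_eq_iff power2_eq_square)
  then show "Im l = 0 \<and> 0 \<le> Re l" by simp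
qed

lemma norm_of_real_diff_le_if_spectrum_nonneg:
  fixes p :: "'a::cstar_algebra"
  assumes sa: "adj p = p" and sp: "spectrum_nonneg p" and t: "norm p \<le> t"
  shows "norm (of_real t - p) \<le> t"
proof (rule self_adjoint_norm_le_spectral_bound)
  show "adj (of_real t - p) = of_real t - p" using sa by simp
  show "0 \<le> t" using t norm_ge_zero order_trans by blast
  fix l assume "l \<in> spectrum (of_real t - p)"
  then have m: "complex_of_real t - l \<in> spectrum p" by (rule spectrum_of_real_diff[THEN iffD1])
  then have "Im (complex_of_real t - l) = 0" "0 \<le> Re (complex_of_real t - l)"
    using sp unfolding spectrum_nonneg_def by auto
  moreover have "cmod (complex_of_real t - l) \<le> norm p" using m by (rule cmod_le_norm_if_spectrum)
  ultimately have "Im l = 0" "Re l \<le> t" "t - Re l \<le> t"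
    using t by (auto simp: cmod_def)
  then show "cmod l \<le> t" by (simp add: cmod_def)
qed

lemma spectrum_nonneg_if_norm_of_real_diff_le:
  fixes p :: "'a::cstar_algebra"
  assumes sa: "adj p = p" and n: "norm (of_real t - p) \<le> t"
  shows "spectrum_nonneg p"
  unfolding spectrum_nonneg_def
proof
  fix l assume l: "l \<in> spectrum p"
  have im: "Im l = 0" by (rule spectrum_self_adjoint_real[OF sa l])
  have "complex_of_real t - (complex_of_real t - l) \<in> spectrum p" using l by simp
  then have "complex_of_real t - l \<in> spectrum (of_real t - p)"
    by (rule spectrum_of_real_diff[THEN iffD2])
  then have "cmod (complex_of_real t - l) \<le> t" using cmod_le_norm_if_spectrum n order_trans by blast
  then have "\<bar>t - Re l\<bar> \<le> t" using im by (simp add: cmod_def)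
  then show "Im l = 0 \<and> 0 \<le> Re l" using im by linarith
qed

lemma spectrum_nonneg_add:
  fixes p q :: "'a::cstar_algebra"
  assumes "adj p = p" "adj q = q" "spectrum_nonneg p" "spectrum_nonneg q"
  shows "spectrum_nonneg (p + q)"
proof (rule spectrum_nonneg_if_norm_of_real_diff_le[where t = "norm p + norm q"])
  show "adj (p + q) = p + q" using assms by (simp add: adj_add)
  have "of_real (norm p + norm q) - (p + q) = (of_real (norm p) - p) + (of_real (norm q) - q)"
    by (simp add: algebra_simps)
  then have "norm (of_real (norm p + norm q) - (p + q))
      \<le> norm (of_real (norm p) - p :: 'a) + norm (of_real (norm q) - q :: 'a)"
    by (metis norm_triangle_ineq)
  also have "\<dots> \<le> norm p + norm q"
    using norm_of_real_diff_le_if_spectrum_nonneg[OF assms(1,3) order_refl]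
      norm_of_real_diff_le_if_spectrum_nonneg[OF assms(2,4) order_refl]
    by simp
  finally show "norm (of_real (norm p + norm q) - (p + q)) \<le> norm p + norm q" .
qed

lemma spectrum_nonneg_uminus_mult_adj:
  fixes x :: "'a::cstar_algebra"
  assumes "spectrum_nonneg (- (adj x * x))"
  shows "spectrum_nonneg (- (x * adj x))"
  unfolding spectrum_nonneg_def
proof
  fix l assume "l \<in> spectrum (- (x * adj x))"
  then have m: "- l \<in> spectrum (x * adj x)" by (simp add: spectrum_uminus)
  show "Im l = 0 \<and> 0 \<le> Re l"
  proof (cases "l = 0")
    case True then show ?thesis by simp
  next
    case False
    then have "- l \<in> spectrum (adj x * x)" using spectrum_mult_commute[of "-l" x "adj x"] m by simp
    then have "l \<in> spectrum (- (adj x * x))" by (simp add: spectrum_uminus)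
    then show ?thesis using assms unfolding spectrum_nonneg_def by auto
  qed
qed

lemma spectrum_nonneg_if_double:
  fixes a :: "'a::cstar_algebra"
  assumes "spectrum_nonneg (a + a)"
  shows "spectrum_nonneg a"
  unfolding spectrum_nonneg_def
proof
  fix l assume l: "l \<in> spectrum a"
  have "a + a = of_complex 0 + of_complex 2 * a" by (simp add: of_complex_numeral mult_2)
  then have "2 * l \<in> spectrum (a + a)"
    using spectrum_affine[where s=2 and c=0 and a=a and l="2*l"] l by simp
  then have "Im (2 * l) = 0 \<and> 0 \<le> Re (2 * l)" using assms unfolding spectrum_nonneg_def by blast
  then show "Im l = 0 \<and> 0 \<le> Re l" by simp
qed

text \<open>\<open>2 x x\<^sup>* = u\<^sup>2 + v\<^sup>2 - 2 x\<^sup>* x\<close> with the self-adjoint \<open>u = x + x\<^sup>*\<close> and \<open>v = -i (x - x\<^sup>*)\<close>.\<close>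
lemma spectrum_nonneg_mult_adj_if_uminus:
  fixes x :: "'a::cstar_algebra"
  assumes n: "spectrum_nonneg (- (adj x * x))"
  shows "spectrum_nonneg (x * adj x)"
proof -
  define u where "u = x + adj x"
  define v where "v = of_complex (- \<i>) * (x - adj x)"
  have su: "adj u = u" unfolding u_def by (simp add: adj_add adj_adj add.commute)
  have sv: "adj v = v" unfolding v_def
    by (simp add: adj_mult adj_adj of_complex_commute algebra_simps of_complex_minus)
  have "v * v = of_complex (- \<i>) * of_complex (- \<i>) * ((x - adj x) * (x - adj x))"
    unfolding v_def by (metis mult_of_complex_left_commute mult.assoc)
  also have "of_complex (- \<i>) * of_complex (- \<i>) = (- 1 :: 'a)"
    by (simp add: of_complex_minus flip: of_complex_mult)
  finally have key: "x * adj x + x * adj x = u * u + v * v + (- (adj x * x)) + (- (adj x * x))"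
    unfolding u_def by (simp add: algebra_simps)
  have sa: "adj (u * u) = u * u" "adj (v * v) = v * v" "adj (- (adj x * x)) = - (adj x * x)"
    using su sv by (simp_all add: adj_mult adj_adj)
  have "spectrum_nonneg (x * adj x + x * adj x)"
    unfolding key
    by (intro spectrum_nonneg_add spectrum_nonneg_square[OF su] spectrum_nonneg_square[OF sv] n sa)
      (simp_all add: adj_add adj_mult adj_adj su sv)
  then show ?thesis by (rule spectrum_nonneg_if_double)
qed

lemma eq_0_if_spectrum_nonneg_uminus_adj_mult:
  fixes x :: "'a::cstar_algebra"
  assumes n: "spectrum_nonneg (- (adj x * x))"
  shows "x = 0"
proof -
  have "norm (x * adj x) \<le> 0"
  proof (rule self_adjoint_norm_le_spectral_bound)
    show "adj (x * adj x) = x * adj x" by (simp add: adj_mult adj_adj)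
    fix l assume l: "l \<in> spectrum (x * adj x)"
    moreover have "- l \<in> spectrum (- (x * adj x))" using l by (simp add: spectrum_uminus)
    ultimately have "Im l = 0" "0 \<le> Re l" "0 \<le> Re (- l)"
      using spectrum_nonneg_mult_adj_if_uminus[OF n] spectrum_nonneg_uminus_mult_adj[OF n]
      unfolding spectrum_nonneg_def by blast+
    then show "cmod l \<le> 0" by (simp add: complex_eq_iff)
  qed simp
  then show ?thesis using mult_adj_self_eq_0 by simp
qed

lemma self_adjoint_eq_0_if_adj_mult_add_square_eq_0:
  fixes x y :: "'a::cstar_algebra"
  assumes sy: "adj y = y" and e: "adj x * x + y * y = 0"
  shows "y = 0"
proof -
  have "- (adj x * x) = y * y" using minus_unique[OF e] .
  then have "spectrum_nonneg (- (adj x * x))" using spectrum_nonneg_square[OF sy] by simp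
  then have "x = 0" by (rule eq_0_if_spectrum_nonneg_uminus_adj_mult)
  then have "adj y * y = 0" using e sy by simp
  then show ?thesis by (rule adj_mult_self_eq_0)
qed

lemma has_inverse_of_real_add:
  fixes p :: "'a::cstar_algebra"
  assumes sp: "spectrum_nonneg p" and c: "c > 0"
  shows "has_inverse (of_real c + p)"
proof -
  have "complex_of_real (-c) \<notin> spectrum p" using sp c unfolding spectrum_nonneg_def by force
  then have "has_inverse (of_complex (complex_of_real (-c)) - p)" by (simp add: spectrum_def)
  moreover have "of_complex (complex_of_real (-c)) - p = - (of_real c + p)"
    by (simp add: of_complex_of_real of_complex_minus)
  ultimately show ?thesis by (metis has_inverse_minus_iff)
qed

section \<open>Square roots\<close>

text \<open>The binomial series of \<open>(1 - k) powr a\<close>, which converges for \<open>\<parallel>k\<parallel> < 1\<close>.\<close>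
definition binomial_series :: "real \<Rightarrow> 'a::{banach,real_normed_algebra_1} \<Rightarrow> 'a" where
  "binomial_series a k = (\<Sum>n. (a gchoose n) *\<^sub>R (- k) ^ n)"

lemma summable_abs_gbinomial_power:
  fixes r :: real
  assumes "0 \<le> r" "r < 1"
  shows "summable (\<lambda>n. \<bar>a gchoose n\<bar> * r ^ n)"
proof -
  have "\<bar>(1 + r) / 2\<bar> < 1" using assms by simp
  from sums_summable[OF gen_binomial_real[OF this, of a]]
  have "summable (\<lambda>n. norm ((a gchoose n) * r ^ n))"
    by (rule powser_insidea) (use assms in simp)
  then show ?thesis using assms by (simp add: abs_mult)
qed

lemma binomial_series_norm_summable:
  fixes k :: "'a::{banach,real_normed_algebra_1}"
  assumes "norm k < 1"
  shows "summable (\<lambda>n. norm ((a gchoose n) *\<^sub>R (- k) ^ n))"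
proof (rule summable_comparison_test'[OF summable_abs_gbinomial_power[OF norm_ge_zero assms]])
  fix n
  show "norm (norm ((a gchoose n) *\<^sub>R (- k) ^ n)) \<le> \<bar>a gchoose n\<bar> * norm k ^ n"
    using norm_power_ineq[of "- k" n] by (simp add: mult_left_mono)
qed

lemma binomial_series_summable:
  fixes k :: "'a::{banach,real_normed_algebra_1}"
  shows "norm k < 1 \<Longrightarrow> summable (\<lambda>n. (a gchoose n) *\<^sub>R (- k) ^ n)"
  by (rule summable_norm_cancel[OF binomial_series_norm_summable])

lemma binomial_series_add:
  fixes k :: "'a::{banach,real_normed_algebra_1}"
  assumes k: "norm k < 1"
  shows "binomial_series a k * binomial_series b k = binomial_series (a + b) k"
proof -
  let ?A = "\<lambda>n. (a gchoose n) *\<^sub>R (- k) ^ n"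
  let ?B = "\<lambda>n. (b gchoose n) *\<^sub>R (- k) ^ n"
  have "(\<lambda>n. \<Sum>i\<le>n. ?A i * ?B (n - i)) sums (binomial_series a k * binomial_series b k)"
    unfolding binomial_series_def
    by (rule Cauchy_product_sums[OF binomial_series_norm_summable[OF k]
          binomial_series_norm_summable[OF k]])
  moreover have "(\<Sum>i\<le>n. ?A i * ?B (n - i)) = ((a + b) gchoose n) *\<^sub>R (- k) ^ n" for n
  proof -
    have "(\<Sum>i\<le>n. ?A i * ?B (n - i)) = (\<Sum>i\<le>n. ((a gchoose i) * (b gchoose (n - i))) *\<^sub>R (- k) ^ n)"
      by (intro sum.cong refl) (simp flip: power_add)
    also have "\<dots> = ((a + b) gchoose n) *\<^sub>R (- k) ^ n"
      using gbinomial_Vandermonde[of a b n] by (simp add: atMost_atLeast0 flip: scaleR_sum_left)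
    finally show ?thesis .
  qed
  ultimately show ?thesis
    using summable_sums[OF binomial_series_summable[OF k]] unfolding binomial_series_def
    by (simp add: sums_unique2)
qed

lemma binomial_series_0: "binomial_series 0 k = (1::'a::{banach,real_normed_algebra_1})"
proof -
  have "(\<lambda>n. ((0::real) gchoose n) *\<^sub>R (- k) ^ n) = (\<lambda>n. if n = 0 then 1 else 0)"
    by (auto simp: gbinomial_0_left)
  then show ?thesis using sums_single[of 0 "\<lambda>_. 1::'a"] by (simp add: binomial_series_def sums_iff)
qed

lemma binomial_series_1: "binomial_series 1 k = 1 - k"
proof -
  have "((1::real) gchoose n) *\<^sub>R (- k) ^ n = 0" if "n \<notin> {0, 1}" for n
    using that binomial_gbinomial[of 1 n, where 'a=real] by (simp add: binomial_eq_0)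
  then have "(\<lambda>n. ((1::real) gchoose n) *\<^sub>R (- k) ^ n)
      sums (\<Sum>n\<in>{0,1}. ((1::real) gchoose n) *\<^sub>R (- k) ^ n)"
    by (intro sums_finite) auto
  then show ?thesis unfolding binomial_series_def by (simp add: sums_iff)
qed

lemma binomial_series_commute:
  fixes k x :: "'a::{banach,real_normed_algebra_1}"
  assumes "x * k = k * x" and k: "norm k < 1"
  shows "x * binomial_series a k = binomial_series a k * x"
proof -
  have "(- k) ^ n * x = x * (- k) ^ n" for n
    by (rule power_commuting_commutes) (simp add: assms(1))
  have "x * binomial_series a k = (\<Sum>n. x * ((a gchoose n) *\<^sub>R (- k) ^ n))"
    unfolding binomial_series_def
    by (rule suminf_mult[OF binomial_series_summable[OF k], symmetric])
  also have "\<dots> = (\<Sum>n. ((a gchoose n) *\<^sub>R (- k) ^ n) * x)"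
    by (simp add: \<open>\<And>n. (- k) ^ n * x = x * (- k) ^ n\<close>)
  also have "\<dots> = binomial_series a k * x"
    unfolding binomial_series_def
    by (rule suminf_mult2[OF binomial_series_summable[OF k], symmetric])
  finally show ?thesis .
qed

lemma adj_binomial_series:
  fixes k :: "'a::cstar_algebra"
  assumes "adj k = k" "norm k < 1"
  shows "adj (binomial_series a k) = binomial_series a k"
  unfolding binomial_series_def
  using bounded_linear.suminf[OF bounded_linear_adj binomial_series_summable[OF assms(2)]]
  by (simp add: adj_power assms(1))

lemma norm_one_minus_scaled_less_1:
  fixes D :: "'a::cstar_algebra"
  assumes sa: "adj D = D" and sp: "spectrum_nonneg (D - 1)"
  defines "c \<equiv> 1 + norm D"
  shows "norm (1 - (1 / c) *\<^sub>R D) < 1"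
proof -
  define k where "k = 1 - (1 / c) *\<^sub>R D"
  have c1: "c \<ge> 1" by (simp add: c_def)
  have "norm k \<le> 1 - 1 / c"
  proof (rule self_adjoint_norm_le_spectral_bound)
    show "adj k = k" using sa by (simp add: k_def)
    show "0 \<le> 1 - 1 / c" using c1 by simp
    fix l assume l: "l \<in> spectrum k"
    have "k = of_complex 1 + of_complex (- (1 / complex_of_real c)) * D"
      unfolding k_def by (simp add: of_complex_minus scaleR_conv_of_real flip: of_complex_of_real)
    then have "(l - 1) / (- (1 / complex_of_real c)) \<in> spectrum D"
      using spectrum_affine[where s="- (1 / complex_of_real c)" and c=1 and a=D and l=l] l c1
      by simp
    then have "complex_of_real c * (1 - l) \<in> spectrum D" using c1 by (simp add: field_simps)
    then have "complex_of_real c * (1 - l) - 1 \<in> spectrum (D - 1)"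
      "cmod (complex_of_real c * (1 - l)) \<le> norm D"
      using spectrum_add_of_complex[of _ "D - 1" 1] cmod_le_norm_if_spectrum by auto
    then have "Im l = 0" "1 \<le> c * (1 - Re l)" "c * (1 - Re l) \<le> c - 1"
      using sp c1 abs_Re_le_cmod[of "complex_of_real c * (1 - l)"]
      unfolding spectrum_nonneg_def by (auto simp: c_def)
    then have "Im l = 0" "Re l \<le> 1 - 1 / c" "1 / c \<le> Re l"
      using c1 by (auto simp: field_simps)
    then have "Im l = 0" "\<bar>Re l\<bar> \<le> 1 - 1 / c" by (auto simp: abs_le_iff)
    then show "cmod l \<le> 1 - 1 / c" by (simp add: cmod_def)
  qed
  then show ?thesis using c1 unfolding k_def by (smt (verit) divide_pos_pos)
qed

text \<open>With \<open>D = c (1 - k)\<close>, the square root and fourth root of \<open>D\<close> are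
  \<open>c\<^sup>1\<^sup>/\<^sup>2 (1 - k)\<^sup>1\<^sup>/\<^sup>2\<close> and \<open>c\<^sup>1\<^sup>/\<^sup>4 (1 - k)\<^sup>1\<^sup>/\<^sup>4\<close>, given by binomial series.\<close>
lemma self_adjoint_sqrt:
  fixes D :: "'a::cstar_algebra"
  assumes sa: "adj D = D" and sp: "spectrum_nonneg (D - 1)"
  obtains S T where "adj S = S" "adj T = T" "T * T = S" "S * S = D" "has_inverse T"
    "\<And>x. x * D = D * x \<Longrightarrow> x * S = S * x \<and> x * T = T * x"
proof
  define c where "c = 1 + norm D"
  define k where "k = 1 - (1 / c) *\<^sub>R D"
  have c1: "c \<ge> 1" by (simp add: c_def)
  have k: "adj k = k" "norm k < 1"
    using sa norm_one_minus_scaled_less_1[OF sa sp] by (simp_all add: k_def c_def)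
  have D: "D = c *\<^sub>R binomial_series 1 k" using c1 by (simp add: k_def binomial_series_1)
  have mult: "binomial_series a k * binomial_series b k = binomial_series (a + b) k" for a b
    by (rule binomial_series_add[OF k(2)])
  define S where "S = sqrt c *\<^sub>R binomial_series (1/2) k"
  define T where "T = sqrt (sqrt c) *\<^sub>R binomial_series (1/4) k"
  show "adj S = S" "adj T = T" using adj_binomial_series[OF k] by (simp_all add: S_def T_def)
  show "T * T = S" "S * S = D" using c1 by (simp_all add: S_def T_def D mult)
  have "T * ((1 / sqrt (sqrt c)) *\<^sub>R binomial_series (- 1/4) k) = 1"
    "((1 / sqrt (sqrt c)) *\<^sub>R binomial_series (- 1/4) k) * T = 1"
    using c1 by (simp_all add: T_def mult binomial_series_0)
  then show "has_inverse T" by (rule has_inverseI)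
  fix x assume "x * D = D * x"
  then have "x * k = k * x" by (simp add: k_def algebra_simps)
  then show "x * S = S * x \<and> x * T = T * x"
    using binomial_series_commute[OF _ k(2)] by (simp add: S_def T_def)
qed

lemma positive_sqrt_support:
  fixes r D P :: "'a::cstar_algebra"
  assumes sr: "adj r = r" and rr: "r * r = D * P"
    and pP: "adj P = P" and PP: "P * P = P" and PD: "P * D = D * P"
  shows "r * P = r" and "P * r = r" and "r * D = D * r"
proof -
  have "adj (r * (1 - P)) * (r * (1 - P)) = (1 - P) * (r * r) * (1 - P)"
    by (simp add: adj_mult sr pP mult.assoc)
  also have "\<dots> = (1 - P) * D * (P * (1 - P))" by (simp add: rr mult.assoc)
  also have "P * (1 - P) = 0" using PP by (simp add: algebra_simps)
  finally have "r * (1 - P) = 0" using adj_mult_self_eq_0 by simp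
  then show rP: "r * P = r" by (simp add: algebra_simps)
  then show Pr: "P * r = r" using sr pP by (metis adj_mult)
  have "r * D = r * (r * r)" using rP PD rr by (metis mult.assoc)
  also have "\<dots> = D * r" using Pr rr by (metis mult.assoc)
  finally show "r * D = D * r" .
qed

text \<open>For \<open>h = r - S P\<close> one has \<open>h (r + S P) h = 0\<close>, i.e. \<open>(b h)\<^sup>* (b h) + (T h)\<^sup>2 = 0\<close>
  for \<open>r = b\<^sup>* b\<close>; hence \<open>T h = 0\<close>, and \<open>h = 0\<close> since \<open>T\<close> is invertible.\<close>
lemma positive_sqrt_mult_projection_unique:
  fixes S T P D b :: "'a::cstar_algebra"
  assumes sS: "adj S = S" and sT: "adj T = T" and TT: "T * T = S" and SS: "S * S = D"
    and iT: "has_inverse T"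
    and comm: "\<And>x. x * D = D * x \<Longrightarrow> x * S = S * x \<and> x * T = T * x"
    and pP: "adj P = P" and PP: "P * P = P" and PD: "P * D = D * P"
    and rr: "adj b * b * (adj b * b) = D * P"
  shows "adj b * b = S * P"
proof -
  define r where "r = adj b * b"
  have sr: "adj r = r" by (simp add: r_def adj_mult adj_adj)
  note support = positive_sqrt_support[OF sr rr[folded r_def] pP PP PD]
  have PS: "P * S = S * P" and PT: "P * T = T * P" using comm[OF PD] by auto
  have rS: "r * S = S * r" and rT: "r * T = T * r" using comm[OF support(3)] by auto
  define h where "h = r - S * P"
  have sh: "adj h = h" by (simp add: h_def adj_mult sr sS pP PS)
  have "P * (S * P) = S * P" using PS PP by (metis mult.assoc)
  then have Ph: "P * h = h" using support(2) by (simp add: h_def right_diff_distrib)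
  have Th: "T * h = h * T"
    using rT PT TT by (simp add: h_def algebra_simps mult.assoc) (metis mult.assoc)
  have "h * (r + S * P) = r * r - S * P * (S * P)"
    using rS support(1,2) by (simp add: h_def algebra_simps) (metis mult.assoc)
  also have "\<dots> = 0" using PS PP SS rr by (simp add: r_def) (metis mult.assoc)
  finally have h0: "h * (r + S * P) = 0" .
  have "adj (b * h) * (b * h) + (T * h) * (T * h) = h * r * h + h * (T * T) * (P * h)"
    using Th Ph by (simp add: r_def adj_mult sh mult.assoc)
  also have "\<dots> = h * (r + S * P) * h" using PS by (simp add: TT algebra_simps mult.assoc)
  finally have "T * h = 0"
    using self_adjoint_eq_0_if_adj_mult_add_square_eq_0[of "T * h" "b * h"] Th sT sh h0
    by (simp add: adj_mult)
  then have "h = 0" using cinv_left_inverse[OF iT] by (metis mult.assoc mult_1_left mult_zero_right)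
  then show ?thesis by (simp add: h_def r_def)
qed

lemma psqrt_mult_projection:
  fixes S T P D :: "'a::cstar_algebra"
  assumes sS: "adj S = S" and sT: "adj T = T" and TT: "T * T = S" and SS: "S * S = D"
    and iT: "has_inverse T"
    and comm: "\<And>x. x * D = D * x \<Longrightarrow> x * S = S * x \<and> x * T = T * x"
    and pP: "adj P = P" and PP: "P * P = P" and PD: "P * D = D * P"
  shows "psqrt (D * P) = S * P"
  unfolding psqrt_def
proof (rule the_equality)
  have PS: "P * S = S * P" and PT: "P * T = T * P" using comm[OF PD] by auto
  have "adj (T * P) * (T * P) = S * P"
    using PT PP by (simp add: adj_mult sT pP mult.assoc flip: TT) (metis mult.assoc)
  moreover have "S * P * (S * P) = D * P" using PS PP SS by (metis mult.assoc)
  ultimately show "Defs.positive (S * P) \<and> S * P * (S * P) = D * P"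
    unfolding Defs.positive_def by metis
next
  fix r assume "Defs.positive r \<and> r * r = D * P"
  then show "r = S * P"
    using positive_sqrt_mult_projection_unique[OF assms] unfolding Defs.positive_def by blast
qed

section \<open>An idempotent and the modulus of its reflection\<close>

text \<open>The ring-theoretic relations between an idempotent \<open>Q\<close>, its adjoint \<open>Q'\<close>, the modulus
  \<open>S = |Q + Q' - 1|\<close> and the inverses \<open>S' = S\<^sup>-\<^sup>1\<close>, \<open>G = (S + 1)\<^sup>-\<^sup>1\<close>.\<close>
locale idempotent_modulus =
  fixes Q Q' S S' G :: "'a::ring_1"
  assumes idem: "Q * Q = Q" "Q' * Q' = Q'"
    and S_inverse: "S * S' = 1" "S' * S = 1"
    and G_inverse: "(S + 1) * G = 1" "G * (S + 1) = 1"
    and commute: "Q * S = S * Q" "Q' * S = S * Q'"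
    and modulus: "S * S = Q * Q' + Q' * Q - Q - Q' + 1"
begin

lemma commute_inverse:
  assumes "x * S = S * x"
  shows "x * S' = S' * x" "x * G = G * x"
proof -
  have "x * S' = S' * (S * x) * S'" using S_inverse by (simp flip: mult.assoc)
  also have "\<dots> = S' * x" using S_inverse by (simp add: mult.assoc flip: assms)
  finally show "x * S' = S' * x" .
  have "x * G = G * ((S + 1) * x) * G" using G_inverse by (simp flip: mult.assoc)
  also have "(S + 1) * x = x * (S + 1)" using assms by (simp add: algebra_simps)
  also have "G * (x * (S + 1)) * G = G * x * ((S + 1) * G)" by (simp add: mult.assoc)
  finally show "x * G = G * x" using G_inverse by simp
qed

lemma G_relations: "S * G = 1 - G" "G * S = 1 - G" "S' * G = S' - G" "G * S' = S' - G"
proof -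
  show SG: "S * G = 1 - G" "G * S = 1 - G" using G_inverse by (simp_all add: algebra_simps)
  have "S' * G = S' * ((S + 1) * G) - (S' * S) * G" by (simp add: algebra_simps)
  then show "S' * G = S' - G" using G_inverse S_inverse by simp
  then show "G * S' = S' - G" using commute_inverse(2)[of S'] S_inverse by (simp add: algebra_simps)
qed

text \<open>Rewrite rules for products \<open>a * (b * x)\<close>; together with \<open>algebra_simps\<close> they
  normalise every expression in \<open>Q, Q', S, S', G\<close> used below.\<close>
lemma reduction_rules:
  "\<And>x. S * (S' * x) = x" "\<And>x. S' * (S * x) = x"
  "\<And>x. S * (G * x) = x - G * x" "\<And>x. G * (S * x) = x - G * x"
  "\<And>x. S' * (G * x) = S' * x - G * x" "\<And>x. G * (S' * x) = S' * x - G * x"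
  "\<And>x. Q * (S * x) = S * (Q * x)" "\<And>x. Q * (S' * x) = S' * (Q * x)"
  "\<And>x. Q * (G * x) = G * (Q * x)"
  "\<And>x. Q' * (S * x) = S * (Q' * x)" "\<And>x. Q' * (S' * x) = S' * (Q' * x)"
  "\<And>x. Q' * (G * x) = G * (Q' * x)"
  "\<And>x. Q * (Q * x) = Q * x" "\<And>x. Q' * (Q' * x) = Q' * x"
  "Q * Q' = S * S - Q' * Q + Q + Q' - 1"
  "\<And>x. Q * (Q' * x) = S * S * x - Q' * (Q * x) + Q * x + Q' * x - x"
proof -
  show "Q * Q' = S * S - Q' * Q + Q + Q' - 1" using modulus by (simp add: algebra_simps)
  then show "\<And>x. Q * (Q' * x) = S * S * x - Q' * (Q * x) + Q * x + Q' * x - x"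
    by (simp add: left_diff_distrib distrib_right flip: mult.assoc)
qed (use S_inverse G_relations commute commute_inverse[OF commute(1)]
      commute_inverse[OF commute(2)] idem in \<open>simp_all add: left_diff_distrib flip: mult.assoc\<close>)

text \<open>\<open>P\<close> is the range projection of \<open>Q\<close>, and \<open>double_suppl Q Q'\<close> is twice the supplementary
  projection of \<open>Q\<close>.\<close>
definition "P = Q * Q' * (S' * S')"

definition "double_suppl x y =
  S' * G * ((S + 2) * (S + 2) * (x * y * (S' * S')) - (S + 2) * (x + y) + y * x)"

lemmas normalise = algebra_simps reduction_rules S_inverse G_relations commute idem
  commute_inverse[OF commute(1)] commute_inverse[OF commute(2)]

lemmas numeral_sums = one_add_one numeral_plus_one one_plus_numeral numeral_plus_numeral
  add_numeral_left

lemma P_idem: "P * P = P"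
  and P_absorb: "P * Q = Q" "Q * P = P" "Q' * P = Q'" "P * Q' = P"
  and P_commute: "P * S = S * P" "P * S' = S' * P" "P * G = G * P"
  and S_square_P: "S * S * P = Q * Q'"
  and reflection_square: "(2 * P - Q) * (2 * P - Q') = Q * Q'"
  unfolding P_def one_add_one[symmetric] by (simp_all add: normalise del: numeral_sums)

lemma double_suppl_complement: "double_suppl (1 - Q) (1 - Q') + double_suppl Q' Q = 2"
  unfolding double_suppl_def one_add_one[symmetric] by (simp add: normalise del: numeral_sums)

lemma double_suppl_swap:
  "double_suppl Q Q' - double_suppl Q' Q = 2 * (2 * (S' * S' * S' * (Q * Q' - Q' * Q)))"
  unfolding double_suppl_def one_add_one[symmetric] by (simp add: normalise del: numeral_sums)

lemma matched_product:
  "(S * P + (2 * P - Q')) * (S' * P) * (G * P + (1 - P)) * (S * P + (2 * P - Q))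
    = double_suppl Q Q'"
  unfolding P_def double_suppl_def one_add_one[symmetric]
  by (simp add: normalise del: numeral_sums)

lemma double_suppl_sandwich:
  "P * (double_suppl Q Q' - 1) * Q = S' * Q"
  "Q * (double_suppl Q Q' - 1) * P = (2 * S' - S) * P"
  unfolding P_def double_suppl_def one_add_one[symmetric]
  by (simp_all add: normalise del: numeral_sums)

lemma reflected_by_double_suppl:
  assumes "Q' = (double_suppl Q Q' - 1) * Q * (double_suppl Q Q' - 1)"
  shows "2 * (Q * Q') = 2 * P"
proof -
  define u where "u = double_suppl Q Q' - 1"
  have "P = P * Q' * P" using P_idem P_absorb by (simp add: mult.assoc)
  also have "\<dots> = P * (u * Q * u) * P" using assms by (simp only: u_def)
  also have "\<dots> = (P * u * Q) * (Q * u * P)" by (metis idem(1) mult.assoc)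
  also have "\<dots> = (2 * (S' * S') - 1) * P"
    unfolding u_def double_suppl_sandwich one_add_one[symmetric]
    using P_absorb P_commute by (simp add: normalise del: numeral_sums)
  finally have "S' * S' * P + S' * S' * P = P + P" by (simp add: algebra_simps mult_2)
  then have "S * S * (S' * S' * P + S' * S' * P) = S * S * P + S * S * P"
    by (simp add: distrib_left)
  then have "P + P = Q * Q' + Q * Q'"
    using S_square_P reduction_rules(1) by (simp add: distrib_left mult.assoc)
  then show ?thesis by (simp add: mult_2)
qed

lemma double_suppl_self:
  assumes "Q' = Q"
  shows "double_suppl Q Q' = 2 * Q"
proof -
  have "S - 1 = (S - 1) * ((S + 1) * G)" using G_inverse by simp
  also have "(S - 1) * (S + 1) = 0" using modulus idem assms by (simp add: algebra_simps)
  then have "(S - 1) * ((S + 1) * G) = 0" by (simp flip: mult.assoc)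
  finally have S1: "S = 1" by simp
  then have "S' = 1" "G + G = 1" using S_inverse G_inverse by (simp_all add: algebra_simps mult_2)
  then have "double_suppl Q Q' = G * (Q + (Q + (Q + Q)))"
    using S1 assms idem unfolding double_suppl_def one_add_one[symmetric]
    by (simp add: algebra_simps del: numeral_sums)
  also have "\<dots> = (G + G) * (Q + Q)" by (simp add: algebra_simps)
  finally show ?thesis using \<open>G + G = 1\<close> by (simp add: mult_2)
qed

end

section \<open>The supplementary projection\<close>

lemma two_mult_cancel: "2 * x = 2 * y \<longleftrightarrow> x = (y::'a::real_algebra_1)"
  by (metis scaleR_conv_of_real of_real_numeral scaleR_cancel_left zero_neq_numeral)

lemma scaleR_half_double: "(1/2) *\<^sub>R (2 * x) = (x::'a::real_algebra_1)"
  by (simp add: mult_2 flip: scaleR_2)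

lemma double_scaleR_half: "2 * ((1/2) *\<^sub>R x) = (x::'a::real_algebra_1)"
  by (simp add: mult_2 flip: scaleR_2)

lemma projection_if_normal_idempotent:
  fixes Q :: "'a::cstar_algebra"
  assumes QQ: "Q * Q = Q" and normal: "Q * adj Q = adj Q * Q"
  shows "projection Q"
proof -
  have "adj (Q - adj Q * Q) * (Q - adj Q * Q) = 0"
    using QQ normal idempotent_adj[of Q]
    by (simp add: idempotent_def adj_mult adj_adj algebra_simps) (metis mult.assoc)
  then have "Q = adj Q * Q" using adj_mult_self_eq_0 by fastforce
  moreover from this have "adj Q = adj Q * Q" by (metis adj_adj adj_mult)
  ultimately show ?thesis unfolding projection_def using QQ by simp
qed

lemma range_proj_eqI:
  fixes P Q :: "'a::cstar_algebra"
  assumes "projection P" "P * Q = Q" "Q * P = P"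
  shows "range_proj Q = P"
  unfolding range_proj_def
proof (rule the_equality)
  fix p assume p: "projection p \<and> p * Q = Q \<and> Q * p = p"
  have "p * P = P" "P * p = p" using assms p by (metis mult.assoc)+
  then show "p = P" using assms(1) p unfolding projection_def by (metis adj_mult)
qed (use assms in simp)

lemma mp_inv_eqI:
  fixes t x :: "'a::cstar_algebra"
  assumes a1: "t * x * t = t" and a2: "x * t * x = x"
    and a3: "adj (t * x) = t * x" and a4: "adj (x * t) = x * t"
  shows "mp_inv t = x"
  unfolding mp_inv_def
proof (rule the_equality)
  show "t * x * t = t \<and> x * t * x = x \<and> adj (t * x) = t * x \<and> adj (x * t) = x * t"
    using assms by simp
next
  fix y assume "t * y * t = t \<and> y * t * y = y \<and> adj (t * y) = t * y \<and> adj (y * t) = y * t"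
  then have b1: "t * y * t = t" and b2: "y * t * y = y"
    and b3: "adj (t * y) = t * y" and b4: "adj (y * t) = y * t"
    by auto
  have at: "adj t = adj t * adj y * adj t" using b1 by (metis adj_mult mult.assoc)
  have at2: "adj t = adj t * adj x * adj t" using a1 by (metis adj_mult mult.assoc)
  have "x = x * (t * x)" using a2 by (simp add: mult.assoc)
  also have "\<dots> = x * (adj x * adj t)" using a3 by (metis adj_mult)
  also have "\<dots> = x * adj x * (adj t * adj y * adj t)" using at by (metis mult.assoc)
  also have "\<dots> = x * (adj x * adj t) * (adj y * adj t)" by (simp add: mult.assoc)
  also have "\<dots> = x * (t * x) * (t * y)" using a3 b3 by (metis adj_mult)
  also have "\<dots> = x * t * y" using a2 by (simp add: mult.assoc)
  finally have xe: "x = x * t * y" .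
  have "y = (y * t) * y" using b2 by (simp add: mult.assoc)
  also have "\<dots> = adj t * adj y * y" using b4 by (metis adj_mult)
  also have "\<dots> = adj t * adj x * adj t * adj y * y" using at2 by metis
  also have "\<dots> = (adj t * adj x) * (adj t * adj y) * y" by (simp add: mult.assoc)
  also have "\<dots> = (x * t) * (y * t) * y" using a4 b4 by (metis adj_mult)
  also have "\<dots> = x * t * y" using b2 by (simp add: mult.assoc)
  finally show "y = x" using xe by simp
qed

lemma mp_inv_mult_projection:
  fixes S P :: "'a::cstar_algebra"
  assumes iS: "has_inverse S" and pP: "adj P = P" and PP: "P * P = P" and PS: "P * S = S * P"
  shows "mp_inv (S * P) = cinv S * P"
proof (rule mp_inv_eqI)
  have PSi: "P * cinv S = cinv S * P" using cinv_commute[OF iS PS[symmetric]] by simp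
  have a: "S * P * (cinv S * P) = P"
  proof -
    have "S * P * (cinv S * P) = S * (P * cinv S) * P" by (simp add: mult.assoc)
    also have "\<dots> = (S * cinv S) * (P * P)" unfolding PSi by (simp add: mult.assoc)
    finally show ?thesis using cinv_right_inverse[OF iS] PP by simp
  qed
  have b: "cinv S * P * (S * P) = P"
  proof -
    have "cinv S * P * (S * P) = cinv S * (P * S) * P" by (simp add: mult.assoc)
    also have "\<dots> = (cinv S * S) * (P * P)" unfolding PS by (simp add: mult.assoc)
    finally show ?thesis using cinv_left_inverse[OF iS] PP by simp
  qed
  have "S * P * (cinv S * P) * (S * P) = (P * S) * P" unfolding a by (simp add: mult.assoc)
  also have "\<dots> = S * (P * P)" unfolding PS by (simp add: mult.assoc)
  finally show "S * P * (cinv S * P) * (S * P) = S * P" unfolding PP .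
  have "cinv S * P * (S * P) * (cinv S * P) = (P * cinv S) * P"
    unfolding b by (simp add: mult.assoc)
  also have "\<dots> = cinv S * (P * P)" unfolding PSi by (simp add: mult.assoc)
  finally show "cinv S * P * (S * P) * (cinv S * P) = cinv S * P" unfolding PP .
  show "adj (S * P * (cinv S * P)) = S * P * (cinv S * P)" unfolding a pP ..
  show "adj (cinv S * P * (S * P)) = cinv S * P * (S * P)" unfolding b pP ..
qed

lemma cinv_mult_projection_add_1:
  fixes S P :: "'a::cstar_algebra"
  assumes i: "has_inverse (S + 1)" and PP: "P * P = P" and PS: "P * S = S * P"
  shows "cinv (S * P + 1) = cinv (S + 1) * P + (1 - P)"
proof (rule cinv_eq)
  define G where "G = cinv (S + 1)"
  have PG: "P * G = G * P"
    unfolding G_def using cinv_commute[OF i, of P] PS by (simp add: algebra_simps)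
  have PG2: "P * (G * x) = G * (P * x)" for x using PG by (metis mult.assoc)
  have PP2: "P * (P * x) = P * x" for x using PP by (metis mult.assoc)
  have PS2: "P * (S * x) = S * (P * x)" for x using PS by (metis mult.assoc)
  have G1: "(S + 1) * G = 1" "G * (S + 1) = 1"
    unfolding G_def using i cinv_right_inverse cinv_left_inverse by auto
  have G1': "S * G = 1 - G" "G * S = 1 - G" using G1 by (simp_all add: algebra_simps)
  have G2: "S * (G * x) = x - G * x" "G * (S * x) = x - G * x" for x
    using G1' by (metis mult.assoc left_diff_distrib mult_1_left)+
  have "(S * P + 1) * (G * P + (1 - P)) = 1"
    by (simp add: algebra_simps mult.assoc PG PG2 PP PP2 G2)
  then show "(S * P + 1) * (cinv (S + 1) * P + (1 - P)) = 1" unfolding G_def .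
  have "(G * P + (1 - P)) * (S * P + 1) = 1"
    by (simp add: algebra_simps mult.assoc PG PG2 PP PP2 PS PS2 G2)
  then show "(cinv (S + 1) * P + (1 - P)) * (S * P + 1) = 1" unfolding G_def .
qed

text \<open>\<open>(Q + Q\<^sup>* - 1)\<^sup>2 = 1 + g\<^sup>2\<close> for the self-adjoint \<open>g = -i(Q - Q\<^sup>*)\<close>.\<close>
lemma spectrum_nonneg_reflection_square_minus_1:
  fixes Q :: "'a::cstar_algebra"
  assumes "idempotent Q"
  shows "spectrum_nonneg ((Q + adj Q - 1) * (Q + adj Q - 1) - 1)"
proof -
  define g where "g = of_complex (- \<i>) * (Q - adj Q)"
  have "g * g = of_complex (- \<i>) * of_complex (- \<i>) * ((Q - adj Q) * (Q - adj Q))"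
    unfolding g_def by (metis mult_of_complex_left_commute mult.assoc)
  also have "of_complex (- \<i>) * of_complex (- \<i>) = (- 1 :: 'a)"
    by (simp add: of_complex_minus flip: of_complex_mult)
  finally have "(Q + adj Q - 1) * (Q + adj Q - 1) - 1 = g * g"
    using assms idempotent_adj[OF assms] by (simp add: idempotent_def algebra_simps)
  moreover have "adj g = g"
    by (simp add: g_def adj_mult adj_adj of_complex_commute algebra_simps of_complex_minus)
  ultimately show ?thesis using spectrum_nonneg_square by metis
qed

lemma absv_reflection:
  fixes Q :: "'a::cstar_algebra"
  assumes "idempotent Q"
  defines "S \<equiv> absv (Q + adj Q - 1)"
  shows "adj S = S" and "has_inverse S" and "has_inverse (S + 1)"
    and "S * S = Q * adj Q + adj Q * Q - Q - adj Q + 1"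
    and "Q * S = S * Q" and "adj Q * S = S * adj Q"
    and "\<And>P. adj P = P \<Longrightarrow> P * P = P \<Longrightarrow> P * (S * S) = S * S * P \<Longrightarrow> psqrt (S * S * P) = S * P"
proof -
  define D where "D = (Q + adj Q - 1) * (Q + adj Q - 1)"
  have sR: "adj (Q + adj Q - 1) = Q + adj Q - 1" by (simp add: adj_add adj_adj)
  then have sD: "adj D = D" by (simp add: D_def adj_mult)
  obtain S0 T where sS0: "adj S0 = S0" and sT: "adj T = T" and TT: "T * T = S0"
    and S0S0: "S0 * S0 = D" and iT: "has_inverse T"
    and commutant: "\<And>x. x * D = D * x \<Longrightarrow> x * S0 = S0 * x \<and> x * T = T * x"
    using self_adjoint_sqrt[OF sD]
      spectrum_nonneg_reflection_square_minus_1[OF assms(1), folded D_def]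
    by blast
  note psqrt = psqrt_mult_projection[OF sS0 sT TT S0S0 iT commutant]
  have "S = S0" using psqrt[of 1] sR by (simp add: S_def D_def absv_def)
  have D: "D = Q * adj Q + adj Q * Q - Q - adj Q + 1"
    using assms(1) idempotent_adj[OF assms(1)] by (simp add: D_def idempotent_def algebra_simps)
  show "adj S = S" "S * S = Q * adj Q + adj Q * Q - Q - adj Q + 1"
    "\<And>P. adj P = P \<Longrightarrow> P * P = P \<Longrightarrow> P * (S * S) = S * S * P \<Longrightarrow> psqrt (S * S * P) = S * P"
    using sS0 S0S0 D psqrt unfolding \<open>S = S0\<close> by auto
  show "has_inverse S" using has_inverse_mult(1)[OF iT iT] by (simp add: \<open>S = S0\<close> TT)
  have "has_inverse (of_real 1 + S)"
    using has_inverse_of_real_add[OF spectrum_nonneg_square[OF sT], of 1] by (simp add: \<open>S = S0\<close> TT)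
  then show "has_inverse (S + 1)" by (simp add: add.commute)
  have "Q * (Q * x) = Q * x" "adj Q * (adj Q * x) = adj Q * x" for x
    using assms(1) idempotent_adj[OF assms(1)] by (simp_all add: idempotent_def flip: mult.assoc)
  then have "Q * D = D * Q" "adj Q * D = D * adj Q"
    using assms(1) idempotent_adj[OF assms(1)] by (simp_all add: D idempotent_def algebra_simps)
  then show "Q * S = S * Q" "adj Q * S = S * adj Q"
    using commutant unfolding \<open>S = S0\<close> by blast+
qed

lemma absv_reflection_adj:
  "absv (adj Q + adj (adj Q) - 1) = absv (Q + adj Q - (1::'a::cstar_algebra))"
  by (simp add: adj_adj add.commute)

lemma absv_reflection_one_minus:
  "absv ((1 - Q) + adj (1 - Q) - 1) = absv (Q + adj Q - (1::'a::cstar_algebra))"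
proof -
  have "(1 - Q) + adj (1 - Q) - 1 = - (Q + adj Q - 1)" by (simp add: algebra_simps del: one_add_one)
  then show ?thesis by (simp only: absv_uminus)
qed

lemma idempotent_modulus_absv:
  fixes Q :: "'a::cstar_algebra"
  assumes "idempotent Q"
  defines "S \<equiv> absv (Q + adj Q - 1)"
  shows "idempotent_modulus Q (adj Q) S (cinv S) (cinv (S + 1))"
  using absv_reflection[OF assms(1), folded S_def] idempotent_adj[OF assms(1)] assms(1)
  by unfold_locales (simp_all add: idempotent_def cinv_right_inverse cinv_left_inverse)

lemma suppl_eq:
  fixes Q :: "'a::cstar_algebra"
  assumes "idempotent Q"
  defines "S \<equiv> absv (Q + adj Q - 1)"
  shows "suppl Q = (1/2) *\<^sub>R idempotent_modulus.double_suppl S (cinv S) (cinv (S + 1)) Q (adj Q)"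
proof -
  interpret M: idempotent_modulus Q "adj Q" S "cinv S" "cinv (S + 1)"
    unfolding S_def by (rule idempotent_modulus_absv[OF assms(1)])
  note R = absv_reflection[OF assms(1), folded S_def]
  have "adj (cinv S) = cinv S" using cinv_adj[OF R(2)] R(1) by simp
  then have "adj M.P = cinv S * cinv S * (Q * adj Q)"
    by (simp add: M.P_def adj_mult adj_adj mult.assoc)
  also have "\<dots> = M.P"
    using M.commute_inverse[OF M.commute(1)] M.commute_inverse[OF M.commute(2)]
    by (simp add: M.P_def mult.assoc M.reduction_rules(8,11))
  finally have sP: "adj M.P = M.P" .
  have pP: "projection M.P" unfolding projection_def using sP M.P_idem by simp
  have rp: "range_proj Q = M.P" using range_proj_eqI[OF pP] M.P_absorb by simp
  define A where "A = 2 * M.P - Q"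
  have "adj (adj A) * adj A = Q * adj Q" using M.reflection_square sP by (simp add: A_def adj_adj)
  also have "Q * adj Q = S * S * M.P" using M.S_square_P ..
  moreover have "M.P * (S * S) = S * S * M.P" using M.P_commute(1) by (metis mult.assoc)
  ultimately have ab: "absv (adj A) = S * M.P"
    using R(7)[OF sP M.P_idem] by (simp add: absv_def)
  have "suppl Q = matched A" unfolding suppl_def rp A_def ..
  also have "\<dots> = (1/2) *\<^sub>R ((S * M.P + (2 * M.P - adj Q)) * (cinv S * M.P)
      * (cinv (S + 1) * M.P + (1 - M.P)) * (S * M.P + (2 * M.P - Q)))"
    unfolding matched_def ab
    using mp_inv_mult_projection[OF R(2) sP M.P_idem M.P_commute(1)]
      cinv_mult_projection_add_1[OF R(3) M.P_idem M.P_commute(1)] sP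
    by (simp add: A_def)
  finally show ?thesis unfolding M.matched_product .
qed

lemma suppl_one_minus:
  fixes Q :: "'a::cstar_algebra"
  assumes "idempotent Q"
  shows "suppl (1 - Q) = 1 - suppl (adj Q)"
proof -
  define S where "S = absv (Q + adj Q - 1)"
  interpret M: idempotent_modulus Q "adj Q" S "cinv S" "cinv (S + 1)"
    unfolding S_def by (rule idempotent_modulus_absv[OF assms])
  have "idempotent (1 - Q)" using assms by (simp add: idempotent_def algebra_simps)
  then have "suppl (1 - Q) = (1/2) *\<^sub>R M.double_suppl (1 - Q) (1 - adj Q)"
    using suppl_eq[of "1 - Q"] unfolding absv_reflection_one_minus
    unfolding adj_diff adj_1 S_def[symmetric] by simp
  moreover have "suppl (adj Q) = (1/2) *\<^sub>R M.double_suppl (adj Q) Q"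
    using suppl_eq[OF idempotent_adj[OF assms]] unfolding absv_reflection_adj
    unfolding adj_adj S_def[symmetric] .
  ultimately have "suppl (1 - Q) + suppl (adj Q) = (1/2) *\<^sub>R (2::'a)"
    by (simp flip: scaleR_add_right M.double_suppl_complement)
  then show ?thesis using scaleR_half_double[of "1::'a"] by (simp add: eq_diff_eq)
qed

lemma suppl_adj_eq_iff_projection:
  fixes Q :: "'a::cstar_algebra"
  assumes "idempotent Q"
  shows "suppl (adj Q) = suppl Q \<longleftrightarrow> projection Q"
proof
  define S where "S = absv (Q + adj Q - 1)"
  interpret M: idempotent_modulus Q "adj Q" S "cinv S" "cinv (S + 1)"
    unfolding S_def by (rule idempotent_modulus_absv[OF assms])
  assume "suppl (adj Q) = suppl Q"
  moreover have "suppl (adj Q) = (1/2) *\<^sub>R M.double_suppl (adj Q) Q"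
    using suppl_eq[OF idempotent_adj[OF assms]] unfolding absv_reflection_adj
    unfolding adj_adj S_def[symmetric] .
  moreover have "suppl Q = (1/2) *\<^sub>R M.double_suppl Q (adj Q)"
    using suppl_eq[OF assms] by (simp add: S_def)
  ultimately have "M.double_suppl Q (adj Q) - M.double_suppl (adj Q) Q = 0" by simp
  then have "2 * (2 * (cinv S * cinv S * cinv S * (Q * adj Q - adj Q * Q))) = 2 * (2 * 0)"
    unfolding M.double_suppl_swap mult_zero_right .
  then have "cinv S * cinv S * cinv S * (Q * adj Q - adj Q * Q) = 0" by (simp only: two_mult_cancel)
  then have "S * (S * (S * (cinv S * cinv S * cinv S * (Q * adj Q - adj Q * Q)))) = 0" by simp
  then have "Q * adj Q = adj Q * Q" using M.S_inverse by (simp flip: mult.assoc)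
  then show "projection Q" using assms projection_if_normal_idempotent by (simp add: idempotent_def)
qed (simp add: projection_def)

lemma suppl_projection: "projection Q \<Longrightarrow> suppl Q = (Q::'a::cstar_algebra)"
  using suppl_eq[of Q] idempotent_modulus.double_suppl_self[OF idempotent_modulus_absv, of Q]
  by (simp add: projection_def idempotent_def scaleR_half_double)

lemma projection_if_quasi_projection_pair_suppl:
  fixes Q :: "'a::cstar_algebra"
  assumes "idempotent Q" and "quasi_projection_pair (suppl Q) Q"
  shows "projection Q"
proof -
  define S where "S = absv (Q + adj Q - 1)"
  interpret M: idempotent_modulus Q "adj Q" S "cinv S" "cinv (S + 1)"
    unfolding S_def by (rule idempotent_modulus_absv[OF assms(1)])
  have "2 * suppl Q = M.double_suppl Q (adj Q)"
    using suppl_eq[OF assms(1)] by (simp add: S_def double_scaleR_half)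
  then have "Q * adj Q = M.P"
    using M.reflected_by_double_suppl assms(2) two_mult_cancel
    unfolding quasi_projection_pair_def by metis
  moreover from this have sP: "adj M.P = M.P" by (metis adj_adj adj_mult)
  ultimately have "(Q - M.P) * adj (Q - M.P) = 0"
    using M.P_idem M.P_absorb(2,4) by (simp add: algebra_simps)
  then have "Q = M.P" using mult_adj_self_eq_0 by fastforce
  then show ?thesis using sP M.P_idem by (simp add: projection_def)
qed

lemma quasi_projection_pair_self: "projection Q \<Longrightarrow> quasi_projection_pair Q (Q::'a::cstar_algebra)"
  by (simp add: quasi_projection_pair_def projection_def idempotent_def algebra_simps mult_2)

theorem proposition5p5:
  fixes Q :: "'a::cstar_algebra"
  assumes "idempotent Q"
  shows "suppl (1 - Q) = 1 - suppl (adj Q) \<and>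
         ((suppl (1 - Q) = 1 - suppl Q \<longleftrightarrow> suppl (adj Q) = suppl Q) \<and>
          (suppl (adj Q) = suppl Q \<longleftrightarrow> projection Q) \<and>
          (projection Q \<longleftrightarrow> quasi_projection_pair (suppl Q) Q))"
proof -
  have "projection Q \<longleftrightarrow> quasi_projection_pair (suppl Q) Q"
    using projection_if_quasi_projection_pair_suppl[OF assms] suppl_projection
      quasi_projection_pair_self by metis
  then show ?thesis using suppl_one_minus[OF assms] suppl_adj_eq_iff_projection[OF assms] by auto
qed

end
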